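(* In the binary relay channel described in the context, fix any relay encoding scheme, i.e. any mapping producing $X_1^n$ from $Y_1^n$ (so that $Z^n - Y_1^n - X_1^n - S^n$ is a Markov chain), and let $S^n$ be the output of the memoryless binary symmetric channel $S_i=X_{1i}\oplus N_i$. Let $R_0=\max_{p(x_1)}I(X_1;S)=1-h(\epsilon)$. Then $$H(Z^n\mid S^n)\ \ge\ n\min_{p(u\mid y_1):\ I(U;Y_1)\le R_0} H(Z\mid U),$$ where in the minimization $(Z,Y_1,U)$ has joint law $p(z)p(y_1\mid z)p(u\mid y_1)$ with $Z\sim\mathrm{Ber}(p)$, $Y_1=Z\oplus V$, $V\sim\mathrm{Ber}(\delta)$ independent of $Z$; the minimization may be restricted to $U$ with $|\mathcal U|\le|\mathcal Y_1|+2$.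
   Context: Binary relay channel: all alphabets are $\{0,1\}$ and $\oplus$ denotes addition mod 2. Let $Z_i$, $V_i$, $N_i$ ($i=1,2,\dots$) be mutually independent i.i.d. sequences with $Z_i\sim\mathrm{Ber}(p)$, $V_i\sim\mathrm{Ber}(\delta)$, $N_i\sim\mathrm{Ber}(\epsilon)$. The relay observes $Y_{1i}=Z_i\oplus V_i$, sends $X_{1i}$, and the destination receives $S_i=X_{1i}\oplus N_i$. Entropies are in bits; $h(q)=-q\log_2q-(1-q)\log_2(1-q)$. *)

theory Defs
  imports Complex_Main
begin

definition bin_ent :: "real \<Rightarrow> real" where
  "bin_ent q = - (if q = 0 then 0 else q * log 2 q)
               - (if 1 - q = 0 then 0 else (1 - q) * log 2 (1 - q))"

definition xlogxy :: "real \<Rightarrow> real \<Rightarrow> real" where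
  "xlogxy a b = (if a = 0 then 0 else a * log 2 (a / b))"

definition ber :: "real \<Rightarrow> bool \<Rightarrow> real" where
  "ber q b = (if b then q else 1 - q)"

definition bxor :: "bool \<Rightarrow> bool \<Rightarrow> bool" where
  "bxor a b = (a \<noteq> b)"

definition seqs :: "nat \<Rightarrow> bool list set" where
  "seqs n = {xs. length xs = n}"

text \<open>A relay encoding scheme: a (possibly randomized) map from Y1^n to X1^n,
  given as a stochastic kernel K y x = P(X1^n = x | Y1^n = y).\<close>
definition relay_kernel :: "nat \<Rightarrow> (bool list \<Rightarrow> bool list \<Rightarrow> real) \<Rightarrow> bool" where
  "relay_kernel n K \<longleftrightarrow>
     (\<forall>y x. 0 \<le> K y x) \<and> (\<forall>y \<in> seqs n. (\<Sum>x\<in>seqs n. K y x) = 1)"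

definition joint :: "real \<Rightarrow> real \<Rightarrow> real \<Rightarrow> nat \<Rightarrow> (bool list \<Rightarrow> bool list \<Rightarrow> real)
    \<Rightarrow> bool list \<Rightarrow> bool list \<Rightarrow> bool list \<Rightarrow> bool list \<Rightarrow> real" where
  "joint p \<delta> \<epsilon> n K z y x s =
     (\<Prod>i<n. ber p (z ! i) * ber \<delta> (bxor (y ! i) (z ! i))) * K y x
     * (\<Prod>i<n. ber \<epsilon> (bxor (s ! i) (x ! i)))"

definition pZS :: "real \<Rightarrow> real \<Rightarrow> real \<Rightarrow> nat \<Rightarrow> (bool list \<Rightarrow> bool list \<Rightarrow> real)
    \<Rightarrow> bool list \<Rightarrow> bool list \<Rightarrow> real" where
  "pZS p \<delta> \<epsilon> n K z s = (\<Sum>y\<in>seqs n. \<Sum>x\<in>seqs n. joint p \<delta> \<epsilon> n K z y x s)"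

definition pS :: "real \<Rightarrow> real \<Rightarrow> real \<Rightarrow> nat \<Rightarrow> (bool list \<Rightarrow> bool list \<Rightarrow> real)
    \<Rightarrow> bool list \<Rightarrow> real" where
  "pS p \<delta> \<epsilon> n K s = (\<Sum>z\<in>seqs n. pZS p \<delta> \<epsilon> n K z s)"

definition H_Zn_Sn :: "real \<Rightarrow> real \<Rightarrow> real \<Rightarrow> nat \<Rightarrow> (bool list \<Rightarrow> bool list \<Rightarrow> real) \<Rightarrow> real" where
  "H_Zn_Sn p \<delta> \<epsilon> n K =
     - (\<Sum>z\<in>seqs n. \<Sum>s\<in>seqs n. xlogxy (pZS p \<delta> \<epsilon> n K z s) (pS p \<delta> \<epsilon> n K s))"

definition test_channel :: "nat \<Rightarrow> (bool \<Rightarrow> nat \<Rightarrow> real) \<Rightarrow> bool" where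
  "test_channel m q \<longleftrightarrow> (\<forall>y u. 0 \<le> q y u) \<and> (\<forall>y. (\<Sum>u<m. q y u) = 1)"

definition pZYU :: "real \<Rightarrow> real \<Rightarrow> (bool \<Rightarrow> nat \<Rightarrow> real) \<Rightarrow> bool \<Rightarrow> bool \<Rightarrow> nat \<Rightarrow> real" where
  "pZYU p \<delta> q z y u = ber p z * ber \<delta> (bxor y z) * q y u"

definition pY1 :: "real \<Rightarrow> real \<Rightarrow> bool \<Rightarrow> real" where
  "pY1 p \<delta> y = (\<Sum>z\<in>UNIV. ber p z * ber \<delta> (bxor y z))"

definition pU :: "real \<Rightarrow> real \<Rightarrow> (bool \<Rightarrow> nat \<Rightarrow> real) \<Rightarrow> nat \<Rightarrow> real" where
  "pU p \<delta> q u = (\<Sum>z\<in>UNIV. \<Sum>y\<in>UNIV. pZYU p \<delta> q z y u)"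

definition pZU :: "real \<Rightarrow> real \<Rightarrow> (bool \<Rightarrow> nat \<Rightarrow> real) \<Rightarrow> bool \<Rightarrow> nat \<Rightarrow> real" where
  "pZU p \<delta> q z u = (\<Sum>y\<in>UNIV. pZYU p \<delta> q z y u)"

definition pYU :: "real \<Rightarrow> real \<Rightarrow> (bool \<Rightarrow> nat \<Rightarrow> real) \<Rightarrow> bool \<Rightarrow> nat \<Rightarrow> real" where
  "pYU p \<delta> q y u = (\<Sum>z\<in>UNIV. pZYU p \<delta> q z y u)"

definition I_UY :: "real \<Rightarrow> real \<Rightarrow> nat \<Rightarrow> (bool \<Rightarrow> nat \<Rightarrow> real) \<Rightarrow> real" where
  "I_UY p \<delta> m q =
     (\<Sum>y\<in>UNIV. \<Sum>u<m. xlogxy (pYU p \<delta> q y u) (pY1 p \<delta> y * pU p \<delta> q u))"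

definition H_ZU :: "real \<Rightarrow> real \<Rightarrow> nat \<Rightarrow> (bool \<Rightarrow> nat \<Rightarrow> real) \<Rightarrow> real" where
  "H_ZU p \<delta> m q = - (\<Sum>z\<in>UNIV. \<Sum>u<m. xlogxy (pZU p \<delta> q z u) (pU p \<delta> q u))"

end

theory Submission
  imports Defs "HOL-Analysis.Analysis" "HOL-Real_Asymp.Real_Asymp"
begin

text \<open>The minimum is described geometrically.  A test channel is a mixture over the values of
  \<open>U\<close> of points \<open>(t, h(t), H(Z | P(Y\<^sub>1 = 1) = t))\<close> on a curve in \<open>\<real>\<^sup>3\<close>; the minimum of
  \<open>H(Z | U)\<close> at rate \<open>r\<close> is a function \<open>Gmin r\<close> defined on the convex hull of this curve,
  which is attained, nonincreasing and convex, and Carath\'eodory's theorem yields a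
  minimiser with at most four points.  For the converse we first prove the single-letter
  bound \<open>Gmin(I(U; Y\<^sub>1)) \<le> H(Z | U)\<close> for any Markov chain \<open>Z - Y\<^sub>1 - U\<close>, then
  \<open>n Gmin(I(Y\<^sub>1\<^sup>n; W) / n) \<le> H(Z\<^sup>n | W)\<close> for any output \<open>W\<close> of \<open>Y\<^sub>1\<^sup>n\<close> by induction on \<open>n\<close>
  (chain rule, Markov structure of the i.i.d. source, convexity of \<open>Gmin\<close>).  With
  \<open>W = S\<^sup>n\<close> and the channel coding bound \<open>I(Y\<^sub>1\<^sup>n; S\<^sup>n) \<le> n R\<^sub>0\<close>, monotonicity of \<open>Gmin\<close>
  gives the theorem.\<close>

section \<open>Entropy of random variables on a finite probability space\<close>

text \<open>A random variable is any function on a finite sample space \<open>\<Omega>\<close> carrying a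
  probability mass function \<open>P\<close>; its law and its entropy (in bits) are computed by
  summing over \<open>\<Omega>\<close>.  Joint variables are pairs of functions.\<close>

definition pmf_on :: "'a set \<Rightarrow> ('a \<Rightarrow> real) \<Rightarrow> bool" where
  "pmf_on \<Omega> P \<longleftrightarrow> finite \<Omega> \<and> (\<forall>\<omega>\<in>\<Omega>. 0 \<le> P \<omega>) \<and> sum P \<Omega> = 1"

definition law :: "'a set \<Rightarrow> ('a \<Rightarrow> real) \<Rightarrow> ('a \<Rightarrow> 'b) \<Rightarrow> 'b \<Rightarrow> real" where
  "law \<Omega> P f v = (\<Sum>\<omega>\<in>\<Omega>. if f \<omega> = v then P \<omega> else 0)"

definition ent :: "'a set \<Rightarrow> ('a \<Rightarrow> real) \<Rightarrow> ('a \<Rightarrow> 'b) \<Rightarrow> real" where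
  "ent \<Omega> P f = - (\<Sum>\<omega>\<in>\<Omega>. P \<omega> * log 2 (law \<Omega> P f (f \<omega>)))"

lemma law_nonneg: "pmf_on \<Omega> P \<Longrightarrow> 0 \<le> law \<Omega> P f v"
  unfolding law_def pmf_on_def by (auto intro!: sum_nonneg)

lemma law_mono:
  assumes "pmf_on \<Omega> P" and "\<And>\<omega>. \<omega> \<in> \<Omega> \<Longrightarrow> f \<omega> = v \<Longrightarrow> g \<omega> = w"
  shows "law \<Omega> P f v \<le> law \<Omega> P g w"
  unfolding law_def using assms by (intro sum_mono) (auto simp: pmf_on_def)

lemma law_pos:
  assumes pm: "pmf_on \<Omega> P" and "\<omega> \<in> \<Omega>" "0 < P \<omega>"
  shows "0 < law \<Omega> P f (f \<omega>)"
proof -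
  have "P \<omega> = (\<Sum>x\<in>{\<omega>}. if f x = f \<omega> then P x else 0)" by simp
  also have "\<dots> \<le> law \<Omega> P f (f \<omega>)" unfolding law_def
    using assms by (intro sum_mono2) (auto simp: pmf_on_def)
  finally show ?thesis using assms(3) by linarith
qed

lemma sum_by_law:
  assumes "pmf_on \<Omega> P" "finite V" "f ` \<Omega> \<subseteq> V"
  shows "(\<Sum>\<omega>\<in>\<Omega>. P \<omega> * F (f \<omega>)) = (\<Sum>v\<in>V. law \<Omega> P f v * F v)"
proof -
  have "(\<Sum>v\<in>V. law \<Omega> P f v * F v) = (\<Sum>v\<in>V. \<Sum>\<omega>\<in>\<Omega>. if f \<omega> = v then P \<omega> * F (f \<omega>) else 0)"
    unfolding law_def sum_distrib_right by (intro sum.cong) auto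
  also have "\<dots> = (\<Sum>\<omega>\<in>\<Omega>. \<Sum>v\<in>V. if f \<omega> = v then P \<omega> * F (f \<omega>) else 0)"
    by (rule sum.swap)
  also have "\<dots> = (\<Sum>\<omega>\<in>\<Omega>. P \<omega> * F (f \<omega>))"
    using assms by (intro sum.cong) (auto simp: sum.delta)
  finally show ?thesis by simp
qed

lemma sum_law: assumes "pmf_on \<Omega> P" "finite V" "f ` \<Omega> \<subseteq> V"
  shows "(\<Sum>v\<in>V. law \<Omega> P f v) = 1"
  using sum_by_law[OF assms, of "\<lambda>_. 1"] assms(1) by (simp add: pmf_on_def)

lemma ent_by_law: assumes "pmf_on \<Omega> P" "finite V" "f ` \<Omega> \<subseteq> V"
  shows "ent \<Omega> P f = - (\<Sum>v\<in>V. law \<Omega> P f v * log 2 (law \<Omega> P f v))"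
  unfolding ent_def using sum_by_law[OF assms, of "\<lambda>v. log 2 (law \<Omega> P f v)"] by simp

lemma law_relabel:
  assumes "\<And>\<omega>. \<omega> \<in> \<Omega> \<Longrightarrow> f \<omega> = v \<longleftrightarrow> g \<omega> = w"
  shows "law \<Omega> P f v = law \<Omega> P g w"
  unfolding law_def using assms by (intro sum.cong) auto

lemma law_marginal:
  assumes pm: "pmf_on \<Omega> P" and "finite B" "g ` \<Omega> \<subseteq> B"
  shows "law \<Omega> P f v = (\<Sum>b\<in>B. law \<Omega> P (\<lambda>\<omega>. (g \<omega>, f \<omega>)) (b, v))"
proof -
  have "(\<Sum>b\<in>B. law \<Omega> P (\<lambda>\<omega>. (g \<omega>, f \<omega>)) (b, v)) =
        (\<Sum>\<omega>\<in>\<Omega>. \<Sum>b\<in>B. if b = g \<omega> then (if f \<omega> = v then P \<omega> else 0) else 0)"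
    unfolding law_def by (subst sum.swap) (intro sum.cong refl, auto)
  also have "\<dots> = law \<Omega> P f v"
    unfolding law_def using assms by (intro sum.cong refl) (auto simp: sum.delta)
  finally show ?thesis by simp
qed

lemma law_marginal_snd:
  assumes "pmf_on \<Omega> P" "finite B" "g ` \<Omega> \<subseteq> B"
  shows "law \<Omega> P f v = (\<Sum>b\<in>B. law \<Omega> P (\<lambda>\<omega>. (f \<omega>, g \<omega>)) (v, b))"
  unfolding law_marginal[OF assms, of f] by (intro sum.cong refl law_relabel) auto

lemma law_marginal_mid:
  assumes "pmf_on \<Omega> P" "finite B" "g ` \<Omega> \<subseteq> B"
  shows "law \<Omega> P (\<lambda>\<omega>. (f \<omega>, k \<omega>)) (a, c) = (\<Sum>b\<in>B. law \<Omega> P (\<lambda>\<omega>. (f \<omega>, g \<omega>, k \<omega>)) (a, b, c))"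
  unfolding law_marginal[OF assms, of "\<lambda>\<omega>. (f \<omega>, k \<omega>)"]
  by (intro sum.cong refl law_relabel) auto

lemma sum_weighted_cong:
  assumes "pmf_on \<Omega> P" and "\<And>\<omega>. \<omega> \<in> \<Omega> \<Longrightarrow> 0 < P \<omega> \<Longrightarrow> F \<omega> = G \<omega>"
  shows "(\<Sum>\<omega>\<in>\<Omega>. P \<omega> * F \<omega>) = (\<Sum>\<omega>\<in>\<Omega>. P \<omega> * G \<omega>)"
proof (rule sum.cong[OF refl])
  fix \<omega> assume "\<omega> \<in> \<Omega>"
  with assms show "P \<omega> * F \<omega> = P \<omega> * G \<omega>"
    by (cases "P \<omega> = 0") (auto simp: pmf_on_def order.order_iff_strict)
qed

lemma ent_relabel:
  assumes "\<And>\<omega> \<omega>'. \<omega> \<in> \<Omega> \<Longrightarrow> \<omega>' \<in> \<Omega> \<Longrightarrow> f \<omega> = f \<omega>' \<longleftrightarrow> g \<omega> = g \<omega>'"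
  shows "ent \<Omega> P f = ent \<Omega> P g"
proof -
  have "law \<Omega> P f (f \<omega>) = law \<Omega> P g (g \<omega>)" if "\<omega> \<in> \<Omega>" for \<omega>
    using assms that by (intro law_relabel) auto
  thus ?thesis unfolding ent_def by simp
qed

lemma ent_swap: "ent \<Omega> P (\<lambda>\<omega>. (f \<omega>, g \<omega>)) = ent \<Omega> P (\<lambda>\<omega>. (g \<omega>, f \<omega>))"
  by (rule ent_relabel) auto

lemma ent_const: assumes "pmf_on \<Omega> P" shows "ent \<Omega> P (\<lambda>\<omega>. c) = 0"
  using assms unfolding ent_def law_def pmf_on_def by simp

text \<open>Gibbs' inequality in the form used below: if \<open>B/A\<close> has expectation at most 1,
  then \<open>log (A/B)\<close> has nonnegative expectation (from \<open>ln x \<le> x - 1\<close>).\<close>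
lemma gibbs:
  assumes "finite \<Omega>" "\<And>\<omega>. \<omega> \<in> \<Omega> \<Longrightarrow> 0 \<le> P \<omega>"
    and "\<And>\<omega>. \<omega> \<in> \<Omega> \<Longrightarrow> 0 < P \<omega> \<Longrightarrow> 0 < A \<omega> \<and> 0 < B \<omega>"
    and "(\<Sum>\<omega>\<in>\<Omega>. P \<omega> * (B \<omega> / A \<omega>)) \<le> sum P \<Omega>"
  shows "0 \<le> (\<Sum>\<omega>\<in>\<Omega>. P \<omega> * log 2 (A \<omega> / B \<omega>))"
proof -
  have le: "P \<omega> * (1 - B \<omega> / A \<omega>) / ln 2 \<le> P \<omega> * log 2 (A \<omega> / B \<omega>)" if "\<omega> \<in> \<Omega>" for \<omega>
  proof (cases "P \<omega> = 0")
    case False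
    then have P: "0 < P \<omega>" using assms(2) that by force
    with assms(3) that have AB: "0 < A \<omega>" "0 < B \<omega>" by auto
    have "ln (B \<omega> / A \<omega>) \<le> B \<omega> / A \<omega> - 1" using AB by (intro ln_le_minus_one) simp
    moreover have "ln (A \<omega> / B \<omega>) = - ln (B \<omega> / A \<omega>)" using AB by (simp add: ln_div)
    ultimately have "1 - B \<omega> / A \<omega> \<le> ln (A \<omega> / B \<omega>)" by simp
    hence "(1 - B \<omega> / A \<omega>) / ln 2 \<le> log 2 (A \<omega> / B \<omega>)"
      unfolding log_def by (simp add: divide_right_mono)
    thus ?thesis using P mult_left_mono[of _ _ "P \<omega>"] by fastforce
  qed simp
  have "(\<Sum>\<omega>\<in>\<Omega>. P \<omega> * (1 - B \<omega> / A \<omega>) / ln 2) = (sum P \<Omega> - (\<Sum>\<omega>\<in>\<Omega>. P \<omega> * (B \<omega> / A \<omega>))) / ln 2"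
    by (simp add: sum_divide_distrib[symmetric] right_diff_distrib sum_subtractf)
  hence "0 \<le> (\<Sum>\<omega>\<in>\<Omega>. P \<omega> * (1 - B \<omega> / A \<omega>) / ln 2)" using assms(4) by simp
  also have "\<dots> \<le> (\<Sum>\<omega>\<in>\<Omega>. P \<omega> * log 2 (A \<omega> / B \<omega>))" using le by (rule sum_mono)
  finally show ?thesis .
qed

lemma ent_mono: assumes pm: "pmf_on \<Omega> P" shows "ent \<Omega> P f \<le> ent \<Omega> P (\<lambda>\<omega>. (f \<omega>, g \<omega>))"
proof -
  have "P \<omega> * log 2 (law \<Omega> P (\<lambda>\<omega>. (f \<omega>, g \<omega>)) (f \<omega>, g \<omega>)) \<le> P \<omega> * log 2 (law \<Omega> P f (f \<omega>))"
    if "\<omega> \<in> \<Omega>" for \<omega>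
  proof (cases "P \<omega> = 0")
    case False
    hence "0 < P \<omega>" using pm that unfolding pmf_on_def by force
    moreover have "0 < law \<Omega> P (\<lambda>\<omega>. (f \<omega>, g \<omega>)) (f \<omega>, g \<omega>)"
      using law_pos[OF pm that calculation, of "\<lambda>\<omega>. (f \<omega>, g \<omega>)"] by simp
    ultimately show ?thesis using law_mono[OF pm, of "\<lambda>\<omega>. (f \<omega>, g \<omega>)" "(f \<omega>, g \<omega>)" f "f \<omega>"]
      by (intro mult_left_mono) auto
  qed simp
  thus ?thesis unfolding ent_def by (simp add: sum_mono)
qed

lemma ent_mono_snd: "pmf_on \<Omega> P \<Longrightarrow> ent \<Omega> P g \<le> ent \<Omega> P (\<lambda>\<omega>. (f \<omega>, g \<omega>))"
  using ent_mono[of \<Omega> P g f] ent_swap[of \<Omega> P g f] by simp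

lemma ent_le_log_card:
  assumes pm: "pmf_on \<Omega> P" and V: "finite V" "f ` \<Omega> \<subseteq> V" "V \<noteq> {}"
  shows "ent \<Omega> P f \<le> log 2 (card V)"
proof -
  have finO: "finite \<Omega>" and P0: "\<And>\<omega>. \<omega> \<in> \<Omega> \<Longrightarrow> 0 \<le> P \<omega>" and P1: "sum P \<Omega> = 1"
    using pm by (auto simp: pmf_on_def)
  have cpos: "0 < real (card V)" using V by (simp add: card_gt_0_iff)
  have "(\<Sum>\<omega>\<in>\<Omega>. P \<omega> * ((1 / card V) / law \<Omega> P f (f \<omega>))) = (\<Sum>v\<in>V. law \<Omega> P f v * ((1 / card V) / law \<Omega> P f v))"
    by (rule sum_by_law[OF pm V(1,2)])
  also have "\<dots> \<le> (\<Sum>v\<in>V. 1 / card V)"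
    by (intro sum_mono) (auto simp: law_nonneg[OF pm])
  also have "\<dots> = sum P \<Omega>" using cpos P1 by simp
  finally have "0 \<le> (\<Sum>\<omega>\<in>\<Omega>. P \<omega> * log 2 (law \<Omega> P f (f \<omega>) / (1 / card V)))"
    using law_pos[OF pm] cpos by (intro gibbs[OF finO P0]) auto
  also have "\<dots> = (\<Sum>\<omega>\<in>\<Omega>. P \<omega> * (log 2 (law \<Omega> P f (f \<omega>)) + log 2 (card V)))"
  proof (rule sum_weighted_cong[OF pm])
    fix \<omega> assume "\<omega> \<in> \<Omega>" "0 < P \<omega>"
    hence "0 < law \<Omega> P f (f \<omega>)" by (rule law_pos[OF pm])
    thus "log 2 (law \<Omega> P f (f \<omega>) / (1 / card V)) = log 2 (law \<Omega> P f (f \<omega>)) + log 2 (card V)"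
      using cpos by (simp add: log_mult)
  qed
  also have "\<dots> = (\<Sum>\<omega>\<in>\<Omega>. P \<omega> * log 2 (law \<Omega> P f (f \<omega>))) + log 2 (card V)"
    using P1 by (simp add: distrib_left sum.distrib sum_distrib_right[symmetric])
  finally show ?thesis unfolding ent_def by simp
qed

text \<open>The key estimate behind submodularity: the ratio between the product of the
  conditional laws and the joint conditional law has expectation at most one.\<close>
lemma submod_ratio_sum:
  assumes pm: "pmf_on \<Omega> P" and fin: "finite FV" "finite GV" "finite KV"
    and im: "f ` \<Omega> \<subseteq> FV" "g ` \<Omega> \<subseteq> GV" "k ` \<Omega> \<subseteq> KV"
  shows "(\<Sum>\<omega>\<in>\<Omega>. P \<omega> * (law \<Omega> P (\<lambda>\<omega>. (f \<omega>, k \<omega>)) (f \<omega>, k \<omega>) * law \<Omega> P (\<lambda>\<omega>. (g \<omega>, k \<omega>)) (g \<omega>, k \<omega>)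
            / (law \<Omega> P (\<lambda>\<omega>. (f \<omega>, g \<omega>, k \<omega>)) (f \<omega>, g \<omega>, k \<omega>) * law \<Omega> P k (k \<omega>)))) \<le> 1"
proof -
  define mfgk where "mfgk = law \<Omega> P (\<lambda>\<omega>. (f \<omega>, g \<omega>, k \<omega>))"
  define mk where "mk = law \<Omega> P k"
  define mfk where "mfk = law \<Omega> P (\<lambda>\<omega>. (f \<omega>, k \<omega>))"
  define mgk where "mgk = law \<Omega> P (\<lambda>\<omega>. (g \<omega>, k \<omega>))"
  define R where "R v = (case v of (a, b, c) \<Rightarrow> mfk (a, c) * mgk (b, c) / (mfgk (a, b, c) * mk c))" for v
  have mnn: "0 \<le> mfgk v" "0 \<le> mk c" "0 \<le> mfk u" "0 \<le> mgk u'" for v c u u'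
    unfolding mfgk_def mk_def mfk_def mgk_def by (simp_all add: law_nonneg[OF pm])
  have "(\<Sum>\<omega>\<in>\<Omega>. P \<omega> * (mfk (f \<omega>, k \<omega>) * mgk (g \<omega>, k \<omega>) / (mfgk (f \<omega>, g \<omega>, k \<omega>) * mk (k \<omega>))))
      = (\<Sum>\<omega>\<in>\<Omega>. P \<omega> * R (f \<omega>, g \<omega>, k \<omega>))"
    unfolding R_def by simp
  also have "\<dots> = (\<Sum>v\<in>FV \<times> (GV \<times> KV). mfgk v * R v)"
    unfolding mfgk_def using im fin by (intro sum_by_law[OF pm]) auto
  also have "\<dots> \<le> (\<Sum>v\<in>FV \<times> (GV \<times> KV). case v of (a, b, c) \<Rightarrow> mfk (a, c) * mgk (b, c) / mk c)"
  proof (rule sum_mono)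
    fix v assume "v \<in> FV \<times> (GV \<times> KV)"
    obtain a b c where v: "v = (a, b, c)" by (cases v) auto
    show "mfgk v * R v \<le> (case v of (a, b, c) \<Rightarrow> mfk (a, c) * mgk (b, c) / mk c)"
      using mnn v by (cases "mfgk v = 0") (auto simp: R_def)
  qed
  also have "\<dots> = (\<Sum>a\<in>FV. \<Sum>b\<in>GV. \<Sum>c\<in>KV. mfk (a, c) * mgk (b, c) / mk c)"
    by (simp add: sum.cartesian_product)
  also have "\<dots> = (\<Sum>a\<in>FV. \<Sum>c\<in>KV. \<Sum>b\<in>GV. mfk (a, c) * mgk (b, c) / mk c)"
    by (intro sum.cong refl, rule sum.swap)
  also have "\<dots> = (\<Sum>c\<in>KV. \<Sum>a\<in>FV. \<Sum>b\<in>GV. mfk (a, c) * mgk (b, c) / mk c)"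
    by (rule sum.swap)
  also have "\<dots> = (\<Sum>c\<in>KV. (\<Sum>a\<in>FV. mfk (a, c)) * (\<Sum>b\<in>GV. mgk (b, c)) / mk c)"
    by (simp add: sum_product sum_divide_distrib)
  also have "\<dots> = (\<Sum>c\<in>KV. mk c)"
    unfolding mfk_def mgk_def mk_def
    using law_marginal[OF pm fin(1) im(1), of k] law_marginal[OF pm fin(2) im(2), of k] by simp
  also have "\<dots> = 1" unfolding mk_def by (rule sum_law[OF pm fin(3) im(3)])
  finally show ?thesis unfolding mfgk_def mk_def mfk_def mgk_def .
qed

lemma submod:
  assumes pm: "pmf_on \<Omega> P" and fin: "finite FV" "finite GV" "finite KV"
    and im: "f ` \<Omega> \<subseteq> FV" "g ` \<Omega> \<subseteq> GV" "k ` \<Omega> \<subseteq> KV"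
  shows "ent \<Omega> P (\<lambda>\<omega>. (f \<omega>, g \<omega>, k \<omega>)) + ent \<Omega> P k \<le>
         ent \<Omega> P (\<lambda>\<omega>. (f \<omega>, k \<omega>)) + ent \<Omega> P (\<lambda>\<omega>. (g \<omega>, k \<omega>))"
proof -
  define mfgk where "mfgk \<omega> = law \<Omega> P (\<lambda>\<omega>. (f \<omega>, g \<omega>, k \<omega>)) (f \<omega>, g \<omega>, k \<omega>)" for \<omega>
  define mk where "mk \<omega> = law \<Omega> P k (k \<omega>)" for \<omega>
  define mfk where "mfk \<omega> = law \<Omega> P (\<lambda>\<omega>. (f \<omega>, k \<omega>)) (f \<omega>, k \<omega>)" for \<omega>
  define mgk where "mgk \<omega> = law \<Omega> P (\<lambda>\<omega>. (g \<omega>, k \<omega>)) (g \<omega>, k \<omega>)" for \<omega>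
  have pos: "0 < mfgk \<omega> \<and> 0 < mk \<omega> \<and> 0 < mfk \<omega> \<and> 0 < mgk \<omega>" if "\<omega> \<in> \<Omega>" "0 < P \<omega>" for \<omega>
    using law_pos[OF pm that, of "\<lambda>\<omega>. (f \<omega>, g \<omega>, k \<omega>)"] law_pos[OF pm that, of k]
      law_pos[OF pm that, of "\<lambda>\<omega>. (f \<omega>, k \<omega>)"] law_pos[OF pm that, of "\<lambda>\<omega>. (g \<omega>, k \<omega>)"]
    unfolding mfgk_def mk_def mfk_def mgk_def by simp
  have P0: "\<And>\<omega>. \<omega> \<in> \<Omega> \<Longrightarrow> 0 \<le> P \<omega>" and P1: "sum P \<Omega> = 1" using pm by (auto simp: pmf_on_def)
  have "0 \<le> (\<Sum>\<omega>\<in>\<Omega>. P \<omega> * log 2 (mfgk \<omega> * mk \<omega> / (mfk \<omega> * mgk \<omega>)))"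
  proof (rule gibbs)
    show "(\<Sum>\<omega>\<in>\<Omega>. P \<omega> * (mfk \<omega> * mgk \<omega> / (mfgk \<omega> * mk \<omega>))) \<le> sum P \<Omega>"
      using submod_ratio_sum[OF assms] P1 unfolding mfgk_def mk_def mfk_def mgk_def by simp
  qed (use pm pos P0 in \<open>auto simp: pmf_on_def\<close>)
  also have "\<dots> = (\<Sum>\<omega>\<in>\<Omega>. P \<omega> * (log 2 (mfgk \<omega>) + log 2 (mk \<omega>) - log 2 (mfk \<omega>) - log 2 (mgk \<omega>)))"
  proof (rule sum_weighted_cong[OF pm])
    fix \<omega> assume "\<omega> \<in> \<Omega>" "0 < P \<omega>"
    with pos have "0 < mfgk \<omega>" "0 < mk \<omega>" "0 < mfk \<omega>" "0 < mgk \<omega>" by auto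
    thus "log 2 (mfgk \<omega> * mk \<omega> / (mfk \<omega> * mgk \<omega>)) =
          log 2 (mfgk \<omega>) + log 2 (mk \<omega>) - log 2 (mfk \<omega>) - log 2 (mgk \<omega>)"
      by (simp add: log_divide log_mult)
  qed
  finally show ?thesis unfolding ent_def mfgk_def mk_def mfk_def mgk_def
    by (simp add: algebra_simps sum.distrib sum_subtractf)
qed

text \<open>Subadditivity \<open>H(F, G) \<le> H(F) + H(G)\<close>: submodularity with a constant \<open>K\<close>.\<close>
lemma subadd: assumes pm: "pmf_on \<Omega> P"
  shows "ent \<Omega> P (\<lambda>\<omega>. (f \<omega>, g \<omega>)) \<le> ent \<Omega> P f + ent \<Omega> P g"
proof -
  have fin: "finite \<Omega>" using pm by (simp add: pmf_on_def)
  have "ent \<Omega> P (\<lambda>\<omega>. (f \<omega>, g \<omega>, ())) + ent \<Omega> P (\<lambda>\<omega>. ()) \<le>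
        ent \<Omega> P (\<lambda>\<omega>. (f \<omega>, ())) + ent \<Omega> P (\<lambda>\<omega>. (g \<omega>, ()))"
    by (rule submod[OF pm finite_imageI[OF fin] finite_imageI[OF fin] finite_imageI[OF fin]]) auto
  moreover have "ent \<Omega> P (\<lambda>\<omega>. (f \<omega>, g \<omega>, ())) = ent \<Omega> P (\<lambda>\<omega>. (f \<omega>, g \<omega>))" by (rule ent_relabel) auto
  moreover have "ent \<Omega> P (\<lambda>\<omega>. (f \<omega>, ())) = ent \<Omega> P f" by (rule ent_relabel) auto
  moreover have "ent \<Omega> P (\<lambda>\<omega>. (g \<omega>, ())) = ent \<Omega> P g" by (rule ent_relabel) auto
  ultimately show ?thesis using ent_const[OF pm, of "()"] by simp
qed

lemma log_sum_eq_of_prod_eq: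
  "0 < a \<Longrightarrow> 0 < b \<Longrightarrow> 0 < c \<Longrightarrow> 0 < d \<Longrightarrow> a * b = c * d \<Longrightarrow>
    log 2 a + log 2 b = log 2 c + log 2 d"
  by (metis log_mult_pos)

text \<open>Equality case of submodularity: if \<open>F - K - G\<close> is a Markov chain, i.e. the joint
  law factorises as \<open>\<alpha>(a, c) \<beta>(b, c)\<close>, then \<open>H(F, G, K) + H(K) = H(F, K) + H(G, K)\<close>.\<close>
lemma markov_eq:
  assumes pm: "pmf_on \<Omega> P" and fin: "finite FV" "finite GV" "finite KV"
    and im: "f ` \<Omega> \<subseteq> FV" "g ` \<Omega> \<subseteq> GV" "k ` \<Omega> \<subseteq> KV"
    and fac: "\<And>a b c. a \<in> FV \<Longrightarrow> b \<in> GV \<Longrightarrow> c \<in> KV \<Longrightarrow>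
       law \<Omega> P (\<lambda>\<omega>. (f \<omega>, g \<omega>, k \<omega>)) (a, b, c) = \<alpha> a c * \<beta> b c"
  shows "ent \<Omega> P (\<lambda>\<omega>. (f \<omega>, g \<omega>, k \<omega>)) + ent \<Omega> P k =
         ent \<Omega> P (\<lambda>\<omega>. (f \<omega>, k \<omega>)) + ent \<Omega> P (\<lambda>\<omega>. (g \<omega>, k \<omega>))"
proof -
  have m1: "law \<Omega> P (\<lambda>\<omega>. (f \<omega>, k \<omega>)) (a, c) = \<alpha> a c * (\<Sum>b\<in>GV. \<beta> b c)"
    if "a \<in> FV" "c \<in> KV" for a c
    using law_marginal_mid[OF pm fin(2) im(2), of f k a c] that fac by (simp add: sum_distrib_left)
  have m2: "law \<Omega> P (\<lambda>\<omega>. (g \<omega>, k \<omega>)) (b, c) = (\<Sum>a\<in>FV. \<alpha> a c) * \<beta> b c"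
    if "b \<in> GV" "c \<in> KV" for b c
    using law_marginal[OF pm fin(1) im(1), of "\<lambda>\<omega>. (g \<omega>, k \<omega>)" "(b, c)"] that fac
    by (simp add: sum_distrib_right)
  have m3: "law \<Omega> P k c = (\<Sum>a\<in>FV. \<alpha> a c) * (\<Sum>b\<in>GV. \<beta> b c)" if "c \<in> KV" for c
    using law_marginal[OF pm fin(1) im(1), of k c] m1 that by (simp add: sum_distrib_right)
  have "log 2 (law \<Omega> P (\<lambda>\<omega>. (f \<omega>, g \<omega>, k \<omega>)) (f \<omega>, g \<omega>, k \<omega>)) + log 2 (law \<Omega> P k (k \<omega>)) =
        log 2 (law \<Omega> P (\<lambda>\<omega>. (f \<omega>, k \<omega>)) (f \<omega>, k \<omega>)) + log 2 (law \<Omega> P (\<lambda>\<omega>. (g \<omega>, k \<omega>)) (g \<omega>, k \<omega>))"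
    if w: "\<omega> \<in> \<Omega>" "0 < P \<omega>" for \<omega>
  proof -
    have abc: "f \<omega> \<in> FV" "g \<omega> \<in> GV" "k \<omega> \<in> KV" using im w by auto
    have "law \<Omega> P (\<lambda>\<omega>. (f \<omega>, g \<omega>, k \<omega>)) (f \<omega>, g \<omega>, k \<omega>) * law \<Omega> P k (k \<omega>) =
          law \<Omega> P (\<lambda>\<omega>. (f \<omega>, k \<omega>)) (f \<omega>, k \<omega>) * law \<Omega> P (\<lambda>\<omega>. (g \<omega>, k \<omega>)) (g \<omega>, k \<omega>)"
      unfolding fac[OF abc] m1[OF abc(1,3)] m2[OF abc(2,3)] m3[OF abc(3)] by (simp only: mult_ac)
    moreover have "0 < law \<Omega> P (\<lambda>\<omega>. (f \<omega>, g \<omega>, k \<omega>)) (f \<omega>, g \<omega>, k \<omega>)" "0 < law \<Omega> P k (k \<omega>)"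
      "0 < law \<Omega> P (\<lambda>\<omega>. (f \<omega>, k \<omega>)) (f \<omega>, k \<omega>)" "0 < law \<Omega> P (\<lambda>\<omega>. (g \<omega>, k \<omega>)) (g \<omega>, k \<omega>)"
      by (rule law_pos[OF pm w])+
    ultimately show ?thesis by (intro log_sum_eq_of_prod_eq)
  qed
  hence "(\<Sum>\<omega>\<in>\<Omega>. P \<omega> * (log 2 (law \<Omega> P (\<lambda>\<omega>. (f \<omega>, g \<omega>, k \<omega>)) (f \<omega>, g \<omega>, k \<omega>)) + log 2 (law \<Omega> P k (k \<omega>)))) =
         (\<Sum>\<omega>\<in>\<Omega>. P \<omega> * (log 2 (law \<Omega> P (\<lambda>\<omega>. (f \<omega>, k \<omega>)) (f \<omega>, k \<omega>)) + log 2 (law \<Omega> P (\<lambda>\<omega>. (g \<omega>, k \<omega>)) (g \<omega>, k \<omega>))))"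
    by (rule sum_weighted_cong[OF pm])
  thus ?thesis unfolding ent_def by (simp add: distrib_left sum.distrib)
qed

text \<open>Consequence for four variables: if \<open>A - (C, D) - B\<close> is a Markov chain, then
  \<open>H(A, B | D) \<ge> H(B | D) + H(A | C, D)\<close> (because \<open>H(A | B, D) \<ge> H(A | B, C, D) = H(A | C, D)\<close>).\<close>
lemma cond_ent_markov_bound:
  assumes pm: "pmf_on \<Omega> P" and fin: "finite AV" "finite BV" "finite CV" "finite DV"
    and im: "a ` \<Omega> \<subseteq> AV" "b ` \<Omega> \<subseteq> BV" "c ` \<Omega> \<subseteq> CV" "d ` \<Omega> \<subseteq> DV"
    and markov: "\<And>x y u v. x \<in> AV \<Longrightarrow> y \<in> BV \<Longrightarrow> u \<in> CV \<Longrightarrow> v \<in> DV \<Longrightarrow>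
       law \<Omega> P (\<lambda>\<omega>. (a \<omega>, b \<omega>, c \<omega>, d \<omega>)) (x, y, u, v) = \<alpha> x (u, v) * \<beta> y (u, v)"
  shows "(ent \<Omega> P (\<lambda>\<omega>. (b \<omega>, d \<omega>)) - ent \<Omega> P d)
           + (ent \<Omega> P (\<lambda>\<omega>. (a \<omega>, c \<omega>, d \<omega>)) - ent \<Omega> P (\<lambda>\<omega>. (c \<omega>, d \<omega>)))
         \<le> ent \<Omega> P (\<lambda>\<omega>. (a \<omega>, b \<omega>, d \<omega>)) - ent \<Omega> P d"
proof -
  have imCD: "(\<lambda>\<omega>. (c \<omega>, d \<omega>)) ` \<Omega> \<subseteq> CV \<times> DV" and imBD: "(\<lambda>\<omega>. (b \<omega>, d \<omega>)) ` \<Omega> \<subseteq> BV \<times> DV"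
    using im by auto
  have sm: "ent \<Omega> P (\<lambda>\<omega>. (a \<omega>, c \<omega>, b \<omega>, d \<omega>)) + ent \<Omega> P (\<lambda>\<omega>. (b \<omega>, d \<omega>))
      \<le> ent \<Omega> P (\<lambda>\<omega>. (a \<omega>, b \<omega>, d \<omega>)) + ent \<Omega> P (\<lambda>\<omega>. (c \<omega>, b \<omega>, d \<omega>))"
    by (rule submod[OF pm fin(1) fin(3) finite_cartesian_product[OF fin(2,4)] im(1) im(3) imBD])
  have mk: "ent \<Omega> P (\<lambda>\<omega>. (a \<omega>, b \<omega>, c \<omega>, d \<omega>)) + ent \<Omega> P (\<lambda>\<omega>. (c \<omega>, d \<omega>))
      = ent \<Omega> P (\<lambda>\<omega>. (a \<omega>, c \<omega>, d \<omega>)) + ent \<Omega> P (\<lambda>\<omega>. (b \<omega>, c \<omega>, d \<omega>))"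
    by (rule markov_eq[OF pm fin(1,2) finite_cartesian_product[OF fin(3,4)] im(1,2) imCD])
      (auto simp: markov)
  have "ent \<Omega> P (\<lambda>\<omega>. (a \<omega>, c \<omega>, b \<omega>, d \<omega>)) = ent \<Omega> P (\<lambda>\<omega>. (a \<omega>, b \<omega>, c \<omega>, d \<omega>))"
    "ent \<Omega> P (\<lambda>\<omega>. (c \<omega>, b \<omega>, d \<omega>)) = ent \<Omega> P (\<lambda>\<omega>. (b \<omega>, c \<omega>, d \<omega>))"
    by (rule ent_relabel; auto)+
  thus ?thesis using sm mk by linarith
qed

lemma cond_ent_as_sum:
  assumes pm: "pmf_on \<Omega> P" and AB: "finite A" "finite B" "f ` \<Omega> \<subseteq> A" "k ` \<Omega> \<subseteq> B"
  shows "- (\<Sum>a\<in>A. \<Sum>b\<in>B. xlogxy (law \<Omega> P (\<lambda>\<omega>. (f \<omega>, k \<omega>)) (a, b)) (law \<Omega> P k b))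
         = ent \<Omega> P (\<lambda>\<omega>. (f \<omega>, k \<omega>)) - ent \<Omega> P k"
proof -
  define j where "j = law \<Omega> P (\<lambda>\<omega>. (f \<omega>, k \<omega>))"
  define m where "m = law \<Omega> P k"
  have split: "xlogxy (j (a, b)) (m b) = j (a, b) * log 2 (j (a, b)) - j (a, b) * log 2 (m b)" for a b
  proof (cases "j (a, b) = 0")
    case False
    hence "0 < j (a, b)" using law_nonneg[OF pm, of "\<lambda>\<omega>. (f \<omega>, k \<omega>)" "(a, b)"] unfolding j_def by linarith
    moreover have "j (a, b) \<le> m b" unfolding j_def m_def by (rule law_mono[OF pm]) auto
    ultimately show ?thesis by (simp add: xlogxy_def log_divide right_diff_distrib)
  qed (simp add: xlogxy_def)
  have "(\<lambda>\<omega>. (f \<omega>, k \<omega>)) ` \<Omega> \<subseteq> A \<times> B" using AB by auto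
  hence "(\<Sum>a\<in>A. \<Sum>b\<in>B. j (a, b) * log 2 (j (a, b))) = - ent \<Omega> P (\<lambda>\<omega>. (f \<omega>, k \<omega>))"
    using ent_by_law[OF pm finite_cartesian_product[OF AB(1,2)]] unfolding j_def
    by (simp add: sum.cartesian_product)
  moreover have "(\<Sum>a\<in>A. \<Sum>b\<in>B. j (a, b) * log 2 (m b)) = - ent \<Omega> P k"
  proof -
    have "(\<Sum>a\<in>A. \<Sum>b\<in>B. j (a, b) * log 2 (m b)) = (\<Sum>b\<in>B. (\<Sum>a\<in>A. j (a, b)) * log 2 (m b))"
      by (subst sum.swap) (simp add: sum_distrib_right)
    also have "\<dots> = (\<Sum>b\<in>B. m b * log 2 (m b))"
      using law_marginal[OF pm AB(1,3), of k] unfolding j_def m_def by simp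
    finally show ?thesis using ent_by_law[OF pm AB(2,4)] unfolding m_def by simp
  qed
  ultimately show ?thesis unfolding j_def[symmetric] m_def[symmetric] split
    by (simp add: sum_subtractf)
qed

lemma mutual_info_as_sum:
  assumes pm: "pmf_on \<Omega> P" and AB: "finite A" "finite B" "f ` \<Omega> \<subseteq> A" "k ` \<Omega> \<subseteq> B"
  shows "(\<Sum>a\<in>A. \<Sum>b\<in>B. xlogxy (law \<Omega> P (\<lambda>\<omega>. (f \<omega>, k \<omega>)) (a, b)) (law \<Omega> P f a * law \<Omega> P k b))
         = ent \<Omega> P f + ent \<Omega> P k - ent \<Omega> P (\<lambda>\<omega>. (f \<omega>, k \<omega>))"
proof -
  define j where "j = law \<Omega> P (\<lambda>\<omega>. (f \<omega>, k \<omega>))"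
  define mf where "mf = law \<Omega> P f"
  define mk where "mk = law \<Omega> P k"
  have split: "xlogxy (j (a, b)) (mf a * mk b) =
      j (a, b) * log 2 (j (a, b)) - j (a, b) * log 2 (mf a) - j (a, b) * log 2 (mk b)" for a b
  proof (cases "j (a, b) = 0")
    case False
    hence "0 < j (a, b)" using law_nonneg[OF pm, of "\<lambda>\<omega>. (f \<omega>, k \<omega>)" "(a, b)"] unfolding j_def by linarith
    moreover have "j (a, b) \<le> mf a" "j (a, b) \<le> mk b" unfolding j_def mf_def mk_def
      by (rule law_mono[OF pm], auto)+
    ultimately show ?thesis by (simp add: xlogxy_def log_divide log_mult algebra_simps)
  qed (simp add: xlogxy_def)
  have "(\<lambda>\<omega>. (f \<omega>, k \<omega>)) ` \<Omega> \<subseteq> A \<times> B" using AB by auto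
  hence "(\<Sum>a\<in>A. \<Sum>b\<in>B. j (a, b) * log 2 (j (a, b))) = - ent \<Omega> P (\<lambda>\<omega>. (f \<omega>, k \<omega>))"
    using ent_by_law[OF pm finite_cartesian_product[OF AB(1,2)]] unfolding j_def
    by (simp add: sum.cartesian_product)
  moreover have "(\<Sum>a\<in>A. \<Sum>b\<in>B. j (a, b) * log 2 (mf a)) = - ent \<Omega> P f"
  proof -
    have "(\<Sum>a\<in>A. \<Sum>b\<in>B. j (a, b) * log 2 (mf a)) = (\<Sum>a\<in>A. mf a * log 2 (mf a))"
      using law_marginal_snd[OF pm AB(2,4), of f] unfolding j_def mf_def by (simp add: sum_distrib_right)
    thus ?thesis using ent_by_law[OF pm AB(1,3)] unfolding mf_def by simp
  qed
  moreover have "(\<Sum>a\<in>A. \<Sum>b\<in>B. j (a, b) * log 2 (mk b)) = - ent \<Omega> P k"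
  proof -
    have "(\<Sum>a\<in>A. \<Sum>b\<in>B. j (a, b) * log 2 (mk b)) = (\<Sum>b\<in>B. (\<Sum>a\<in>A. j (a, b)) * log 2 (mk b))"
      by (subst sum.swap) (simp add: sum_distrib_right)
    also have "\<dots> = (\<Sum>b\<in>B. mk b * log 2 (mk b))"
      using law_marginal[OF pm AB(1,3), of k] unfolding j_def mk_def by simp
    finally show ?thesis using ent_by_law[OF pm AB(2,4)] unfolding mk_def by simp
  qed
  ultimately show ?thesis unfolding j_def[symmetric] mf_def[symmetric] mk_def[symmetric] split
    by (simp add: sum_subtractf)
qed

lemma law_proj:
  assumes bij: "bij_betw \<psi> (K \<times> M) \<Omega>" and fin: "finite K" "finite M"
    and h: "\<And>k m. k \<in> K \<Longrightarrow> m \<in> M \<Longrightarrow> h (\<psi> (k, m)) = k" and v: "v \<in> K"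
  shows "law \<Omega> P h v = (\<Sum>m\<in>M. P (\<psi> (v, m)))"
proof -
  have "law \<Omega> P h v = (\<Sum>x\<in>K \<times> M. if h (\<psi> x) = v then P (\<psi> x) else 0)"
    unfolding law_def using sum.reindex_bij_betw[OF bij, of "\<lambda>\<omega>. if h \<omega> = v then P \<omega> else 0"] by simp
  also have "\<dots> = (\<Sum>(k, m)\<in>K \<times> M. if k = v then P (\<psi> (k, m)) else 0)"
    using h by (intro sum.cong refl) (clarsimp simp: h)
  also have "\<dots> = (\<Sum>k\<in>K. \<Sum>m\<in>M. if k = v then P (\<psi> (k, m)) else 0)"
    by (simp add: sum.cartesian_product)
  also have "\<dots> = (\<Sum>k\<in>K. if k = v then (\<Sum>m\<in>M. P (\<psi> (k, m))) else 0)"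
    by (intro sum.cong refl) auto
  also have "\<dots> = (\<Sum>m\<in>M. P (\<psi> (v, m)))" using v fin by (simp add: sum.delta')
  finally show ?thesis .
qed

lemma ent_marginal:
  assumes pm: "pmf_on \<Omega> P" and fin: "finite \<Omega>'" and im: "\<rho> ` \<Omega> \<subseteq> \<Omega>'"
    and eq: "\<And>x. x \<in> \<Omega>' \<Longrightarrow> law \<Omega> P \<rho> x = P' x"
  shows "ent \<Omega> P (\<lambda>\<omega>. f (\<rho> \<omega>)) = ent \<Omega>' P' f"
proof -
  have m: "law \<Omega> P (\<lambda>\<omega>. f (\<rho> \<omega>)) v = law \<Omega>' P' f v" for v
  proof -
    have "law \<Omega> P (\<lambda>\<omega>. f (\<rho> \<omega>)) v = (\<Sum>\<omega>\<in>\<Omega>. P \<omega> * (\<lambda>x. if f x = v then 1 else 0) (\<rho> \<omega>))"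
      unfolding law_def by (intro sum.cong) auto
    also have "\<dots> = (\<Sum>x\<in>\<Omega>'. law \<Omega> P \<rho> x * (if f x = v then 1 else 0))"
      by (rule sum_by_law[OF pm fin im])
    also have "\<dots> = (\<Sum>x\<in>\<Omega>'. P' x * (if f x = v then 1 else 0))" using eq by (intro sum.cong) auto
    also have "\<dots> = law \<Omega>' P' f v" unfolding law_def by (intro sum.cong) auto
    finally show ?thesis .
  qed
  have "ent \<Omega> P (\<lambda>\<omega>. f (\<rho> \<omega>)) = - (\<Sum>\<omega>\<in>\<Omega>. P \<omega> * (\<lambda>x. log 2 (law \<Omega>' P' f (f x))) (\<rho> \<omega>))"
    unfolding ent_def m by simp
  also have "\<dots> = - (\<Sum>x\<in>\<Omega>'. law \<Omega> P \<rho> x * log 2 (law \<Omega>' P' f (f x)))"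
    by (subst sum_by_law[OF pm fin im]) simp
  also have "\<dots> = ent \<Omega>' P' f" unfolding ent_def using eq by simp
  finally show ?thesis .
qed

section \<open>Bernoulli variables and the binary entropy function\<close>

lemma ber_simps [simp]: "ber q True = q" "ber q False = 1 - q"
  unfolding ber_def by auto

lemma bxor_simps [simp]: "bxor True True = False" "bxor False False = False"
  "bxor True False = True" "bxor False True = True"
  unfolding bxor_def by auto

lemma ber_nonneg: "0 \<le> q \<Longrightarrow> q \<le> 1 \<Longrightarrow> 0 \<le> ber q b"
  unfolding ber_def by auto

lemma sum_UNIV_bool: "(\<Sum>b\<in>(UNIV::bool set). f b) = f True + f False"
  by (simp add: UNIV_bool add.commute)

lemma finite_bool_UNIV: "finite (UNIV :: bool set)" by simp

lemma sum_UNIV_bool_pair: "(\<Sum>m\<in>(UNIV :: (bool \<times> bool) set). f m) = (\<Sum>a\<in>UNIV. \<Sum>b\<in>UNIV. f (a, b))"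
  by (simp add: sum.cartesian_product UNIV_Times_UNIV[symmetric] del: UNIV_Times_UNIV)

lemma xlogxy_eq: "xlogxy a b = a * log 2 (a / b)"
  unfolding xlogxy_def by simp

text \<open>Since \<open>log 2 0 = 0\<close> in Isabelle, the convention \<open>0 log 0 = 0\<close> is automatic.\<close>
lemma bin_ent_eq: "bin_ent q = - (q * log 2 q) - (1 - q) * log 2 (1 - q)"
  unfolding bin_ent_def by auto

lemma bin_ent_continuous: "continuous_on {0..1} bin_ent"
proof (rule continuous_on_IccI)
  show "(bin_ent \<longlongrightarrow> bin_ent 0) (at_right 0)" "(bin_ent \<longlongrightarrow> bin_ent 1) (at_left 1)"
    unfolding bin_ent_eq[abs_def] by (simp, real_asymp)+
  fix x :: real assume "0 < x" "x < 1"
  thus "bin_ent \<midarrow>x\<rightarrow> bin_ent x"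
    unfolding bin_ent_eq[abs_def] by (intro tendsto_intros) auto
qed simp

text \<open>\<open>h(q) \<le> 1\<close>, so that the channel capacity \<open>R\<^sub>0 = 1 - h(\<epsilon>)\<close> is nonnegative.\<close>
lemma bin_ent_le1: assumes "0 \<le> \<epsilon>" "\<epsilon> \<le> 1" shows "bin_ent \<epsilon> \<le> 1"
proof -
  have pm: "pmf_on UNIV (ber \<epsilon>)" unfolding pmf_on_def using assms ber_nonneg by (auto simp: sum_UNIV_bool)
  have "ent UNIV (ber \<epsilon>) (\<lambda>b. b) \<le> log 2 (card (UNIV :: bool set))"
    by (rule ent_le_log_card[OF pm]) auto
  moreover have "ent UNIV (ber \<epsilon>) (\<lambda>b. b) = bin_ent \<epsilon>"
    unfolding ent_def law_def by (simp add: sum_UNIV_bool bin_ent_eq)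
  ultimately show ?thesis by simp
qed

lemma binary_cond_ent_term:
  assumes "0 \<le> x" "x \<le> w"
  shows "- (x * log 2 (x / w)) - ((w - x) * log 2 ((w - x) / w)) = w * bin_ent (x / w)"
proof (cases "w = 0")
  case True thus ?thesis using assms by (simp add: bin_ent_eq)
next
  case False
  hence w: "0 < w" using assms by simp
  define c where "c = x / w"
  have x: "x = w * c" unfolding c_def using w by simp
  have wx: "w - x = w * (1 - c)" unfolding x by (simp add: algebra_simps)
  have "(w - x) / w = 1 - c" using w unfolding wx by simp
  hence "- (x * log 2 (x / w)) - ((w - x) * log 2 ((w - x) / w)) = - (w * c * log 2 c) - (w * (1 - c) * log 2 (1 - c))"
    unfolding c_def[symmetric] x[symmetric] wx[symmetric] by simp
  also have "\<dots> = w * bin_ent c" unfolding bin_ent_eq by (simp add: algebra_simps)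
  finally show ?thesis unfolding c_def .
qed

lemma binary_mutual_info_term:
  assumes "0 \<le> x" "x \<le> w" "0 < \<alpha>" "\<alpha> < 1"
  shows "x * log 2 (x / (\<alpha> * w)) + (w - x) * log 2 ((w - x) / ((1 - \<alpha>) * w))
     = - (w * bin_ent (x / w)) - x * log 2 \<alpha> - (w - x) * log 2 (1 - \<alpha>)"
proof -
  have split: "y * log 2 (y / (\<beta> * w)) = y * log 2 (y / w) - y * log 2 \<beta>"
    if "0 \<le> y" "y \<le> w" "0 < \<beta>" for y \<beta>
  proof (cases "y = 0")
    case False
    hence "0 < y" "0 < w" using that by auto
    moreover have "y / (\<beta> * w) = (y / w) / \<beta>" by (simp add: mult.commute)
    ultimately show ?thesis using that by (simp add: log_divide log_mult algebra_simps)
  qed simp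
  show ?thesis using split[of x \<alpha>] split[of "w - x" "1 - \<alpha>"] assms
      binary_cond_ent_term[OF assms(1,2)] by simp
qed
section \<open>The single-letter trade-off curve\<close>

text \<open>For a nondegenerate source \<open>Z ~ Ber(p)\<close> observed through \<open>Y\<^sub>1 = Z \<oplus> V\<close>,
  a test channel \<open>p(u | y\<^sub>1)\<close> is described by the weights \<open>P(U = u)\<close> and the posteriors
  \<open>t\<^sub>u = P(Y\<^sub>1 = 1 | U = u)\<close>.  Each value \<open>u\<close> contributes the point
  \<open>curve t\<^sub>u = (t\<^sub>u, H(Y\<^sub>1 | U = u), H(Z | U = u))\<close>, so the achievable triples
  \<open>(P(Y\<^sub>1 = 1), H(Y\<^sub>1 | U), H(Z | U))\<close> lie in the convex hull of the curve.\<close>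

locale binary_source =
  fixes p \<delta> :: real
  assumes p0: "0 < p" and p1: "p < 1" and d0: "0 \<le> \<delta>" and d1: "\<delta> \<le> 1"
begin

text \<open>\<open>py1 = P(Y\<^sub>1 = 1)\<close>, and \<open>post1\<close>, \<open>post0\<close> are \<open>P(Z = 1 | Y\<^sub>1 = 1)\<close>, \<open>P(Z = 1 | Y\<^sub>1 = 0)\<close>;
  \<open>zpost t\<close> is \<open>P(Z = 1 | U = u)\<close> when \<open>P(Y\<^sub>1 = 1 | U = u) = t\<close>.\<close>
definition "py1 = p * (1 - \<delta>) + (1 - p) * \<delta>"
definition "post1 = p * (1 - \<delta>) / py1"
definition "post0 = p * \<delta> / (1 - py1)"
definition "zpost t = t * post1 + (1 - t) * post0"
definition "hz t = bin_ent (zpost t)"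
definition "curve t = (t, bin_ent t, hz t)"

text \<open>A point \<open>(t, e, g)\<close> is feasible for rate \<open>r\<close> if it is a mixture of curve points with
  mean posterior \<open>P(Y\<^sub>1 = 1)\<close> and mutual information \<open>h(P(Y\<^sub>1 = 1)) - e \<le> r\<close>.\<close>
definition "curve_hull = convex hull (curve ` {0..1})"
definition "feasible r = {v \<in> curve_hull. fst v = py1 \<and> bin_ent py1 - r \<le> fst (snd v)}"
definition "Gmin r = Inf ((\<lambda>v. snd (snd v)) ` feasible r)"

lemma params: "0 \<le> p" "p \<le> 1" "0 \<le> \<delta>" "\<delta> \<le> 1"
  using p0 p1 d0 d1 by auto

lemma py1: "0 < py1" "py1 < 1"
proof -
  have "0 < p * (1 - \<delta>) \<or> 0 < (1 - p) * \<delta>"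
    using p0 p1 d0 d1 by (cases "\<delta> = 1") (auto intro!: mult_pos_pos)
  moreover have "0 \<le> p * (1 - \<delta>)" "0 \<le> (1 - p) * \<delta>" using p0 p1 d0 d1 by auto
  ultimately show "0 < py1" unfolding py1_def by linarith
  have "0 < p * \<delta> \<or> 0 < (1 - p) * (1 - \<delta>)"
    using p0 p1 d0 d1 by (cases "\<delta> = 0") (auto intro!: mult_pos_pos)
  moreover have "0 \<le> p * \<delta>" "0 \<le> (1 - p) * (1 - \<delta>)" using p0 p1 d0 d1 by auto
  moreover have "1 - py1 = p * \<delta> + (1 - p) * (1 - \<delta>)" unfolding py1_def by (simp add: algebra_simps)
  ultimately show "py1 < 1" by linarith
qed

lemma post_range: "0 \<le> post1" "post1 \<le> 1" "0 \<le> post0" "post0 \<le> 1"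
proof -
  have n: "0 \<le> (1 - p) * \<delta>" "0 \<le> p * (1 - \<delta>)" "0 \<le> p * \<delta>" "0 \<le> (1 - p) * (1 - \<delta>)"
    using p0 p1 d0 d1 by auto
  have "p * (1 - \<delta>) \<le> py1" "0 \<le> p * (1 - \<delta>)" unfolding py1_def using n by linarith+
  thus "0 \<le> post1" "post1 \<le> 1" unfolding post1_def using py1 by auto
  have "1 - py1 = p * \<delta> + (1 - p) * (1 - \<delta>)" unfolding py1_def by (simp add: algebra_simps)
  hence "p * \<delta> \<le> 1 - py1" "0 \<le> p * \<delta>" using n by linarith+
  thus "0 \<le> post0" "post0 \<le> 1" unfolding post0_def using py1 by auto
qed

lemma zpost_range: "t \<in> {0..1} \<Longrightarrow> zpost t \<in> {0..1}"
proof -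
  assume t: "t \<in> {0..1}"
  have "0 \<le> t * post1" "0 \<le> (1 - t) * post0" using t post_range by auto
  moreover have "t * post1 \<le> t" "(1 - t) * post0 \<le> 1 - t" using t post_range by (auto intro: mult_left_le)
  ultimately show ?thesis unfolding zpost_def by auto
qed

lemma curve_continuous: "continuous_on {0..1} curve"
proof -
  have cl: "continuous_on {0..1} zpost" unfolding zpost_def by (intro continuous_intros)
  have "zpost ` {0..1} \<subseteq> {0..1}" using zpost_range by auto
  hence "continuous_on {0..1} hz" unfolding hz_def
    using continuous_on_compose2[OF bin_ent_continuous cl] by simp
  thus ?thesis unfolding curve_def using bin_ent_continuous by (intro continuous_intros) auto
qed

lemma curve_hull_compact: "compact curve_hull"
  unfolding curve_hull_def by (intro compact_convex_hull compact_continuous_image curve_continuous compact_Icc)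

lemma curve_hull_convex: "convex curve_hull" unfolding curve_hull_def by simp

lemma curve_in_hull: "t \<in> {0..1} \<Longrightarrow> curve t \<in> curve_hull"
  unfolding curve_hull_def by (meson hull_inc image_eqI)

lemma feasible_compact: "compact (feasible r)"
proof -
  have "feasible r = curve_hull \<inter> ({v. fst v = py1} \<inter> {v. bin_ent py1 - r \<le> fst (snd v)})" unfolding feasible_def by auto
  moreover have "closed ({v::real \<times> real \<times> real. fst v = py1} \<inter> {v. bin_ent py1 - r \<le> fst (snd v)})"
    by (intro closed_Int closed_Collect_eq closed_Collect_le continuous_intros)
  ultimately show ?thesis using curve_hull_compact by (simp add: compact_Int_closed)
qed

lemma feasible_ne: "0 \<le> r \<Longrightarrow> curve py1 \<in> feasible r"
  unfolding feasible_def using curve_in_hull[of py1] py1 by (auto simp: curve_def)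

lemma feasible_bdd: "bdd_below ((\<lambda>v. snd (snd v)) ` feasible r)"
  by (intro bounded_imp_bdd_below compact_imp_bounded compact_continuous_image feasible_compact continuous_intros)

lemma Gmin_le: "v \<in> feasible r \<Longrightarrow> Gmin r \<le> snd (snd v)"
  unfolding Gmin_def by (intro cInf_lower feasible_bdd) auto

lemma Gmin_attain: assumes "0 \<le> r" shows "\<exists>v\<in>feasible r. snd (snd v) = Gmin r"
proof -
  have c: "continuous_on (feasible r) (\<lambda>v. snd (snd v))" by (intro continuous_intros)
  have ne: "feasible r \<noteq> {}" using feasible_ne[OF assms] by auto
  obtain v where v: "v \<in> feasible r" "\<forall>y\<in>feasible r. snd (snd v) \<le> snd (snd y)"
    using continuous_attains_inf[OF feasible_compact ne c] by blast
  have "Gmin r = snd (snd v)" unfolding Gmin_def using v by (intro cInf_eq_minimum) auto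
  thus ?thesis using v by auto
qed

lemma Gmin_mono: assumes "0 \<le> r1" "r1 \<le> r2" shows "Gmin r2 \<le> Gmin r1"
proof -
  obtain v where v: "v \<in> feasible r1" "snd (snd v) = Gmin r1" using Gmin_attain[OF assms(1)] by auto
  have "v \<in> feasible r2" using v(1) assms unfolding feasible_def by auto
  thus ?thesis using Gmin_le v(2) by metis
qed

text \<open>Convexity of \<open>Gmin\<close>: mixing optimal points for two rates is feasible for the mixed rate.\<close>
lemma Gmin_convex: assumes "0 \<le> r1" "0 \<le> r2" "0 \<le> l" "l \<le> 1"
  shows "Gmin (l * r1 + (1 - l) * r2) \<le> l * Gmin r1 + (1 - l) * Gmin r2"
proof -
  obtain v1 where v1: "v1 \<in> feasible r1" "snd (snd v1) = Gmin r1" using Gmin_attain[OF assms(1)] by auto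
  obtain v2 where v2: "v2 \<in> feasible r2" "snd (snd v2) = Gmin r2" using Gmin_attain[OF assms(2)] by auto
  define v where "v = l *\<^sub>R v1 + (1 - l) *\<^sub>R v2"
  have "v \<in> curve_hull" unfolding v_def using v1 v2 assms curve_hull_convex unfolding feasible_def
    by (auto simp: convex_def)
  moreover have "fst v = py1" using v1 v2 unfolding v_def feasible_def by (auto simp: algebra_simps)
  moreover have "bin_ent py1 - (l * r1 + (1 - l) * r2) \<le> fst (snd v)"
  proof -
    have "l * (bin_ent py1 - r1) \<le> l * fst (snd v1)" "(1 - l) * (bin_ent py1 - r2) \<le> (1 - l) * fst (snd v2)"
      using v1 v2 assms unfolding feasible_def by (auto intro!: mult_left_mono)
    thus ?thesis unfolding v_def by (simp add: algebra_simps)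
  qed
  ultimately have "v \<in> feasible (l * r1 + (1 - l) * r2)" unfolding feasible_def by auto
  hence "Gmin (l * r1 + (1 - l) * r2) \<le> snd (snd v)" by (rule Gmin_le)
  also have "\<dots> = l * Gmin r1 + (1 - l) * Gmin r2" unfolding v_def using v1 v2 by simp
  finally show ?thesis .
qed

text \<open>The form of convexity used in the induction over the block length:
  \<open>(n + 1) Gmin((I\<^sub>1 + I\<^sub>2) / (n + 1)) \<le> n Gmin(I\<^sub>1 / n) + Gmin(I\<^sub>2)\<close>.\<close>
lemma Gmin_average:
  assumes "0 \<le> I1" "0 \<le> I2"
  shows "real (Suc n) * Gmin ((I1 + I2) / real (Suc n)) \<le> real n * Gmin (I1 / real n) + Gmin I2"
proof (cases "n = 0")
  case True thus ?thesis using Gmin_mono[OF assms(2), of "I1 + I2"] assms by simp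
next
  case False
  define l where "l = real n / real (Suc n)"
  have l: "0 \<le> l" "l \<le> 1" unfolding l_def by auto
  have l1: "1 - l = 1 / real (Suc n)" unfolding l_def by (simp add: field_simps)
  have l2: "real (Suc n) * l = real n" unfolding l_def by simp
  have "l * (I1 / real n) = I1 / real (Suc n)" unfolding l_def using False by simp
  hence "l * (I1 / real n) + (1 - l) * I2 = (I1 + I2) / real (Suc n)"
    unfolding l1 by (simp add: add_divide_distrib)
  hence "Gmin ((I1 + I2) / real (Suc n)) \<le> l * Gmin (I1 / real n) + (1 - l) * Gmin I2"
    using Gmin_convex[of "I1 / real n" I2 l] assms l by simp
  hence "real (Suc n) * Gmin ((I1 + I2) / real (Suc n)) \<le> real (Suc n) * (l * Gmin (I1 / real n) + (1 - l) * Gmin I2)"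
    by (intro mult_left_mono) auto
  also have "\<dots> = real n * Gmin (I1 / real n) + Gmin I2"
    unfolding distrib_left mult.assoc[symmetric] l2 l1 by simp
  finally show ?thesis .
qed

end

section \<open>Single-letter quantities of a test channel as mixtures over the curve\<close>

lemma test_channel_nonneg: "test_channel m q \<Longrightarrow> 0 \<le> q y u" unfolding test_channel_def by auto

lemma test_channel_sum: "test_channel m q \<Longrightarrow> (\<Sum>u<m. q y u) = 1" unfolding test_channel_def by auto

context binary_source
begin

lemma pY1_T: "pY1 p \<delta> True = py1" and pY1_F: "pY1 p \<delta> False = 1 - py1"
  unfolding pY1_def py1_def by (simp_all add: sum_UNIV_bool algebra_simps)

lemma pYU_eq: "pYU p \<delta> q y u = pY1 p \<delta> y * q y u"
  unfolding pYU_def pY1_def pZYU_def by (simp add: sum_distrib_right)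

lemma pU_eq: "pU p \<delta> q u = py1 * q True u + (1 - py1) * q False u"
  unfolding pU_def pZYU_def py1_def by (simp add: sum_UNIV_bool algebra_simps)

lemma pZU_T: "pZU p \<delta> q True u = p * (1 - \<delta>) * q True u + p * \<delta> * q False u"
  and pZU_F: "pZU p \<delta> q False u = (1 - p) * \<delta> * q True u + (1 - p) * (1 - \<delta>) * q False u"
  unfolding pZU_def pZYU_def by (simp_all add: sum_UNIV_bool)

text \<open>\<open>u_prob q j = P(U = j)\<close> and \<open>y_post q j = P(Y\<^sub>1 = 1 | U = j)\<close>.\<close>
definition "u_prob q j = pU p \<delta> q j"
definition "y_post q j = py1 * q True j / u_prob q j"

lemma u_prob_nonneg: "test_channel m q \<Longrightarrow> 0 \<le> u_prob q j"
  unfolding u_prob_def pU_eq using py1 test_channel_nonneg[of m q] by (auto intro!: add_nonneg_nonneg)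

lemma u_prob_y_post: "test_channel m q \<Longrightarrow> u_prob q j * y_post q j = py1 * q True j"
proof -
  assume tc: "test_channel m q"
  show ?thesis
  proof (cases "u_prob q j = 0")
    case True
    hence "py1 * q True j + (1 - py1) * q False j = 0" unfolding u_prob_def pU_eq .
    moreover have "0 \<le> py1 * q True j" "0 \<le> (1 - py1) * q False j" using py1 test_channel_nonneg[OF tc] by auto
    ultimately have "py1 * q True j = 0" by linarith
    thus ?thesis using True by simp
  qed (simp add: y_post_def)
qed

lemma y_post_range: "test_channel m q \<Longrightarrow> y_post q j \<in> {0..1}"
proof -
  assume tc: "test_channel m q"
  have "0 \<le> py1 * q True j" "0 \<le> (1 - py1) * q False j" using py1 test_channel_nonneg[OF tc] by auto
  hence "py1 * q True j \<le> u_prob q j" unfolding u_prob_def pU_eq by simp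
  thus ?thesis unfolding y_post_def using \<open>0 \<le> py1 * q True j\<close>
    by (auto simp: divide_le_eq_1 intro: divide_nonneg_nonneg)
qed

lemma sum_u_prob: "test_channel m q \<Longrightarrow> (\<Sum>j<m. u_prob q j) = 1"
  unfolding u_prob_def pU_eq by (simp add: sum.distrib sum_distrib_left[symmetric] test_channel_sum)

lemma sum_u_prob_y_post: "test_channel m q \<Longrightarrow> (\<Sum>j<m. u_prob q j * y_post q j) = py1"
  using u_prob_y_post by (simp add: sum_distrib_left[symmetric] test_channel_sum)

lemma H_ZU_mixture: assumes tc: "test_channel m q"
  shows "H_ZU p \<delta> m q = (\<Sum>j<m. u_prob q j * hz (y_post q j))"
proof -
  have "H_ZU p \<delta> m q = (\<Sum>j<m. - xlogxy (pZU p \<delta> q True j) (pU p \<delta> q j) - xlogxy (pZU p \<delta> q False j) (pU p \<delta> q j))"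
    unfolding H_ZU_def sum_UNIV_bool by (simp add: sum.distrib sum_negf[symmetric] sum_subtractf)
  also have "\<dots> = (\<Sum>j<m. u_prob q j * hz (y_post q j))"
  proof (rule sum.cong[OF refl])
    fix j
    define x where "x = pZU p \<delta> q True j"
    have qq: "0 \<le> q True j" "0 \<le> q False j" using test_channel_nonneg[OF tc] by auto
    have F: "pZU p \<delta> q False j = u_prob q j - x"
      unfolding x_def u_prob_def pZU_T pZU_F pU_eq py1_def by (simp add: algebra_simps)
    have x0: "0 \<le> x" unfolding x_def pZU_T using p0 p1 d0 d1 qq by (auto intro!: add_nonneg_nonneg)
    have x1: "x \<le> u_prob q j" using F qq p0 p1 d0 d1 unfolding pZU_F
      by (metis add_nonneg_nonneg diff_ge_0_iff_ge mult_nonneg_nonneg le_diff_eq diff_le_eq x0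
          zero_le_mult_iff less_eq_real_def)
    show "- xlogxy (pZU p \<delta> q True j) (pU p \<delta> q j) - xlogxy (pZU p \<delta> q False j) (pU p \<delta> q j) = u_prob q j * hz (y_post q j)"
    proof (cases "u_prob q j = 0")
      case True
      hence "x = 0" using x0 x1 by simp
      thus ?thesis unfolding xlogxy_eq F x_def[symmetric] u_prob_def[symmetric] using True by simp
    next
      case False
      have lam_eq: "x / u_prob q j = zpost (y_post q j)"
      proof -
        have "zpost (y_post q j) = (py1 * q True j * post1 + (u_prob q j - py1 * q True j) * post0) / u_prob q j"
          unfolding zpost_def y_post_def using False by (simp add: field_simps)
        also have "u_prob q j - py1 * q True j = (1 - py1) * q False j" unfolding u_prob_def pU_eq by simp
        also have "py1 * q True j * post1 + (1 - py1) * q False j * post0 = x"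
          unfolding x_def pZU_T post1_def post0_def using py1 by simp
        finally show ?thesis by simp
      qed
      show ?thesis
        unfolding xlogxy_eq F x_def[symmetric] u_prob_def[symmetric] hz_def lam_eq[symmetric]
        using binary_cond_ent_term[OF x0 x1] by simp
    qed
  qed
  finally show ?thesis .
qed

lemma I_UY_mixture: assumes tc: "test_channel m q"
  shows "I_UY p \<delta> m q = bin_ent py1 - (\<Sum>j<m. u_prob q j * bin_ent (y_post q j))"
proof -
  have "I_UY p \<delta> m q = (\<Sum>j<m. xlogxy (pYU p \<delta> q True j) (py1 * u_prob q j) + xlogxy (pYU p \<delta> q False j) ((1 - py1) * u_prob q j))"
    unfolding I_UY_def sum_UNIV_bool pY1_T pY1_F u_prob_def by (simp add: sum.distrib)
  also have "\<dots> = (\<Sum>j<m. - (u_prob q j * bin_ent (y_post q j)) - py1 * q True j * log 2 py1 - (1 - py1) * q False j * log 2 (1 - py1))"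
  proof (rule sum.cong[OF refl])
    fix j
    define x where "x = py1 * q True j"
    have qq: "0 \<le> q True j" "0 \<le> q False j" using test_channel_nonneg[OF tc] by auto
    have F: "pYU p \<delta> q False j = u_prob q j - x" unfolding x_def pYU_eq pY1_F u_prob_def pU_eq by simp
    have x0: "0 \<le> x" unfolding x_def using py1 qq by simp
    have "0 \<le> (1 - py1) * q False j" using py1 qq by simp
    hence x1: "x \<le> u_prob q j" using F unfolding pYU_eq pY1_F by simp
    have T: "pYU p \<delta> q True j = x" unfolding x_def pYU_eq pY1_T ..
    have tx: "y_post q j = x / u_prob q j" unfolding y_post_def x_def ..
    have "u_prob q j - x = (1 - py1) * q False j" unfolding x_def u_prob_def pU_eq by simp
    thus "xlogxy (pYU p \<delta> q True j) (py1 * u_prob q j) + xlogxy (pYU p \<delta> q False j) ((1 - py1) * u_prob q j) =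
      - (u_prob q j * bin_ent (y_post q j)) - py1 * q True j * log 2 py1 - (1 - py1) * q False j * log 2 (1 - py1)"
      unfolding xlogxy_eq T F tx using binary_mutual_info_term[OF x0 x1 py1] unfolding x_def by simp
  qed
  also have "\<dots> = - (\<Sum>j<m. u_prob q j * bin_ent (y_post q j)) - py1 * log 2 py1 - (1 - py1) * log 2 (1 - py1)"
    using test_channel_sum[OF tc] by (simp add: sum_subtractf sum_negf sum_distrib_left[symmetric]
        mult.assoc[symmetric] sum_distrib_right[symmetric])
  finally show ?thesis unfolding bin_ent_eq by simp
qed

lemma test_channel_feasible: assumes tc: "test_channel m q" and r: "I_UY p \<delta> m q \<le> r"
  shows "(py1, bin_ent py1 - I_UY p \<delta> m q, H_ZU p \<delta> m q) \<in> feasible r"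
proof -
  have "(\<Sum>j<m. u_prob q j *\<^sub>R curve (y_post q j)) \<in> curve_hull"
    using sum_u_prob[OF tc] u_prob_nonneg[OF tc] curve_in_hull y_post_range[OF tc]
    by (intro convex_sum[OF _ curve_hull_convex]) auto
  moreover have "(\<Sum>j<m. u_prob q j *\<^sub>R curve (y_post q j)) = (py1, bin_ent py1 - I_UY p \<delta> m q, H_ZU p \<delta> m q)"
    unfolding I_UY_mixture[OF tc] H_ZU_mixture[OF tc] using sum_u_prob_y_post[OF tc]
    by (simp add: curve_def fst_sum snd_sum prod_eq_iff)
  ultimately show ?thesis unfolding feasible_def using r by auto
qed

lemma Gmin_le_H_ZU: "test_channel m q \<Longrightarrow> I_UY p \<delta> m q \<le> r \<Longrightarrow> Gmin r \<le> H_ZU p \<delta> m q"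
  using Gmin_le[OF test_channel_feasible] by simp

text \<open>Carath\'eodory's theorem in \<open>\<real>\<^sup>3\<close>: a point of the hull is a mixture of at most four
  curve points.  This is where the cardinality bound \<open>|U| \<le> 4 = |Y\<^sub>1| + 2\<close> comes from.\<close>
lemma curve_hull_caratheodory:
  assumes "v \<in> curve_hull"
  obtains m w t where "m \<le> (4::nat)" "\<And>j. j < m \<Longrightarrow> 0 \<le> w j \<and> t j \<in> {0..1}" "(\<Sum>j<m. w j) = 1"
    "v = (\<Sum>j<m. w j *\<^sub>R curve (t j))"
proof -
  obtain S where S: "finite S" "S \<subseteq> curve ` {0..1}" "card S \<le> DIM(real \<times> real \<times> real) + 1"
    "v \<in> convex hull S"
    using assms unfolding curve_hull_def caratheodory[of "curve ` {0..1}"] by blast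
  obtain u where u: "\<forall>x\<in>S. 0 \<le> u x" "sum u S = 1" "(\<Sum>x\<in>S. u x *\<^sub>R x) = v"
    using S(4) unfolding convex_hull_finite[OF S(1)] by blast
  define m where "m = card S"
  obtain e where e: "bij_betw e {..<m} S"
    using ex_bij_betw_nat_finite[OF S(1)] unfolding m_def lessThan_atLeast0 by blast
  have eS: "e j \<in> S" if "j < m" for j using e that unfolding bij_betw_def by auto
  define t where "t j = fst (e j)" for j
  have t: "t j \<in> {0..1} \<and> e j = curve (t j)" if "j < m" for j
    using eS[OF that] S(2) unfolding t_def by (auto simp: curve_def)
  show ?thesis
  proof
    show "m \<le> 4" using S(3) unfolding m_def by simp
    show "0 \<le> u (e j) \<and> t j \<in> {0..1}" if "j < m" for j using u(1) eS[OF that] t[OF that] by auto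
    show "(\<Sum>j<m. u (e j)) = 1" using sum.reindex_bij_betw[OF e, of u] u(2) by simp
    have "(\<Sum>j<m. u (e j) *\<^sub>R curve (t j)) = (\<Sum>j<m. u (e j) *\<^sub>R e j)" using t by simp
    also have "\<dots> = v" using sum.reindex_bij_betw[OF e, of "\<lambda>x. u x *\<^sub>R x"] u(3) by simp
    finally show "v = (\<Sum>j<m. u (e j) *\<^sub>R curve (t j))" by simp
  qed
qed

text \<open>Conversely, a mixture of curve points with mean posterior \<open>P(Y\<^sub>1 = 1)\<close> is realised by a
  test channel: give \<open>U = j\<close> probability \<open>w j\<close> and posterior \<open>t j\<close> (Bayes' rule).\<close>
lemma mixture_test_channel:
  assumes wt: "\<And>j. j < m \<Longrightarrow> 0 \<le> w j \<and> t j \<in> {0..1}" and w1: "(\<Sum>j<m. w j) = 1"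
    and mean: "(\<Sum>j<m. w j * t j) = py1"
  obtains q where "test_channel m q" "H_ZU p \<delta> m q = (\<Sum>j<m. w j * hz (t j))"
    "I_UY p \<delta> m q = bin_ent py1 - (\<Sum>j<m. w j * bin_ent (t j))"
proof -
  define q where "q y j = (if j < m then (if y then w j * t j / py1 else w j * (1 - t j) / (1 - py1)) else 0)" for y j
  have tc: "test_channel m q"
    unfolding test_channel_def
  proof (intro conjI allI)
    fix y u show "0 \<le> q y u" unfolding q_def using wt py1 by auto
  next
    fix y
    have "(\<Sum>u<m. q True u) = (\<Sum>u<m. w u * t u) / py1" unfolding q_def by (simp add: sum_divide_distrib)
    moreover have "(\<Sum>u<m. q False u) = (\<Sum>u<m. w u - w u * t u) / (1 - py1)"
      unfolding q_def by (simp add: sum_divide_distrib algebra_simps)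
    ultimately show "(\<Sum>u<m. q y u) = 1" using mean w1 py1 by (cases y) (simp_all add: sum_subtractf)
  qed
  have u_prob_eq: "u_prob q j = w j" if "j < m" for j
  proof -
    have "py1 * (w j * t j / py1) = w j * t j" "(1 - py1) * (w j * (1 - t j) / (1 - py1)) = w j * (1 - t j)"
      using py1 by simp_all
    thus ?thesis unfolding u_prob_def pU_eq q_def using that by (simp add: algebra_simps)
  qed
  have mix: "u_prob q j * g (y_post q j) = w j * g (t j)" if "j < m" for j and g :: "real \<Rightarrow> real"
  proof (cases "w j = 0")
    case False
    have "y_post q j = t j" unfolding y_post_def u_prob_eq[OF that] q_def using that py1 False by simp
    thus ?thesis using u_prob_eq[OF that] by simp
  qed (simp add: u_prob_eq[OF that])
  show ?thesis
  proof
    show "test_channel m q" by (rule tc)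
    show "H_ZU p \<delta> m q = (\<Sum>j<m. w j * hz (t j))" unfolding H_ZU_mixture[OF tc] using mix by simp
    show "I_UY p \<delta> m q = bin_ent py1 - (\<Sum>j<m. w j * bin_ent (t j))"
      unfolding I_UY_mixture[OF tc] using mix[where g=bin_ent] by simp
  qed
qed

lemma Gmin_achieved:
  assumes r: "0 \<le> r"
  obtains m q where "m \<le> (4::nat)" "test_channel m q" "I_UY p \<delta> m q \<le> r" "H_ZU p \<delta> m q = Gmin r"
proof -
  obtain v where v: "v \<in> feasible r" "snd (snd v) = Gmin r" using Gmin_attain[OF r] by auto
  have "v \<in> curve_hull" using v(1) unfolding feasible_def by simp
  then obtain m :: nat and w t where m4: "m \<le> 4" and wt: "\<And>j. j < m \<Longrightarrow> 0 \<le> w j \<and> t j \<in> {0..1}"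
    and w1: "(\<Sum>j<m. w j) = 1" and v_eq: "v = (\<Sum>j<m. w j *\<^sub>R curve (t j))"
    by (rule curve_hull_caratheodory) blast
  have coords: "fst v = (\<Sum>j<m. w j * t j)" "fst (snd v) = (\<Sum>j<m. w j * bin_ent (t j))"
    "snd (snd v) = (\<Sum>j<m. w j * hz (t j))"
    unfolding v_eq by (simp add: fst_sum snd_sum curve_def)+
  have "(\<Sum>j<m. w j * t j) = py1" using v(1) coords unfolding feasible_def by simp
  then obtain q where "test_channel m q" "H_ZU p \<delta> m q = (\<Sum>j<m. w j * hz (t j))"
    "I_UY p \<delta> m q = bin_ent py1 - (\<Sum>j<m. w j * bin_ent (t j))"
    using mixture_test_channel[OF wt w1] by blast
  moreover have "bin_ent py1 - (\<Sum>j<m. w j * bin_ent (t j)) \<le> r"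
    using v(1) coords unfolding feasible_def by simp
  ultimately show ?thesis using that m4 v(2) coords by simp
qed

end

section \<open>A single-letter converse bound\<close>

definition pi1 :: "real \<Rightarrow> real \<Rightarrow> bool \<Rightarrow> bool \<Rightarrow> real" where
  "pi1 p \<delta> a b = ber p a * ber \<delta> (bxor b a)"

lemma pi1_nonneg: "0 \<le> p \<Longrightarrow> p \<le> 1 \<Longrightarrow> 0 \<le> \<delta> \<Longrightarrow> \<delta> \<le> 1 \<Longrightarrow> 0 \<le> pi1 p \<delta> a b"
  unfolding pi1_def using ber_nonneg by auto

lemma single_letter_entropies:
  assumes pm: "pmf_on \<Omega> P" and k: "k ` \<Omega> \<subseteq> {..<m}" and tc: "test_channel m q"
    and fac: "\<And>a b u. u < m \<Longrightarrow> law \<Omega> P (\<lambda>\<omega>. (f \<omega>, g \<omega>, k \<omega>)) (a, b, u) = pi1 p \<delta> a b * q b u"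
  shows "H_ZU p \<delta> m q = ent \<Omega> P (\<lambda>\<omega>. (f \<omega>, k \<omega>)) - ent \<Omega> P k"
    and "I_UY p \<delta> m q = ent \<Omega> P g + ent \<Omega> P k - ent \<Omega> P (\<lambda>\<omega>. (g \<omega>, k \<omega>))"
proof -
  have B: "finite (UNIV :: bool set)" "f ` \<Omega> \<subseteq> UNIV" "g ` \<Omega> \<subseteq> UNIV" by auto
  have mFK: "law \<Omega> P (\<lambda>\<omega>. (f \<omega>, k \<omega>)) (a, j) = pZU p \<delta> q a j" if "j < m" for a j
    unfolding law_marginal_mid[OF pm B(1,3), of f k] pZU_def pZYU_def
    using fac that by (simp add: pi1_def)
  have mGK: "law \<Omega> P (\<lambda>\<omega>. (g \<omega>, k \<omega>)) (b, j) = pYU p \<delta> q b j" if "j < m" for b j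
    using law_marginal[OF pm B(1,2), of "\<lambda>\<omega>. (g \<omega>, k \<omega>)" "(b, j)"] fac that
    unfolding pYU_def pZYU_def by (simp add: pi1_def)
  have mK: "law \<Omega> P k j = pU p \<delta> q j" if "j < m" for j
    using law_marginal[OF pm B(1,3), of k j] mGK[OF that] unfolding pU_def pYU_def
    by (simp add: sum_UNIV_bool)
  have mG: "law \<Omega> P g b = pY1 p \<delta> b" for b
  proof -
    have "law \<Omega> P g b = (\<Sum>j<m. pYU p \<delta> q b j)"
      using law_marginal_snd[OF pm _ k, of g b] mGK by simp
    also have "\<dots> = pY1 p \<delta> b * (\<Sum>j<m. q b j)"
      unfolding pYU_def pY1_def pZYU_def by (simp add: sum_distrib_left sum_distrib_right)
    also have "\<dots> = pY1 p \<delta> b" using test_channel_sum[OF tc, of b] by simp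
    finally show ?thesis .
  qed
  show "H_ZU p \<delta> m q = ent \<Omega> P (\<lambda>\<omega>. (f \<omega>, k \<omega>)) - ent \<Omega> P k"
    unfolding H_ZU_def cond_ent_as_sum[OF pm B(1) finite_lessThan B(2) k, symmetric]
    using mFK mK by simp
  show "I_UY p \<delta> m q = ent \<Omega> P g + ent \<Omega> P k - ent \<Omega> P (\<lambda>\<omega>. (g \<omega>, k \<omega>))"
    unfolding I_UY_def mutual_info_as_sum[OF pm B(1) finite_lessThan B(3) k, symmetric]
    using mGK mK mG by simp
qed

context binary_source
begin

text \<open>The values of \<open>U\<close> are enumerated to obtain
  a test channel.\<close>
lemma single_letter_bound:
  fixes f g :: "'a \<Rightarrow> bool" and k :: "'a \<Rightarrow> 'u"
  assumes pm: "pmf_on \<Omega> P" and U: "finite U" "k ` \<Omega> \<subseteq> U"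
    and \<kappa>0: "\<And>b u. 0 \<le> \<kappa> b u" and \<kappa>1: "\<And>b. (\<Sum>u\<in>U. \<kappa> b u) = 1"
    and fac: "\<And>a b u. u \<in> U \<Longrightarrow> law \<Omega> P (\<lambda>\<omega>. (f \<omega>, g \<omega>, k \<omega>)) (a, b, u) = pi1 p \<delta> a b * \<kappa> b u"
  shows "Gmin (ent \<Omega> P g + ent \<Omega> P k - ent \<Omega> P (\<lambda>\<omega>. (g \<omega>, k \<omega>)))
         \<le> ent \<Omega> P (\<lambda>\<omega>. (f \<omega>, k \<omega>)) - ent \<Omega> P k"
proof -
  define m where "m = card U"
  obtain e where e: "bij_betw e {..<m} U"
    using ex_bij_betw_nat_finite[OF U(1)] unfolding m_def lessThan_atLeast0 by blast
  define k' where "k' \<omega> = inv_into {..<m} e (k \<omega>)" for \<omega>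
  have k'_iff: "k' \<omega> = j \<longleftrightarrow> k \<omega> = e j" if "\<omega> \<in> \<Omega>" "j < m" for \<omega> j
    using that U(2) e unfolding k'_def bij_betw_def
    by (auto simp: inv_into_f_f f_inv_into_f)
  have k'_im: "k' ` \<Omega> \<subseteq> {..<m}"
    using U(2) e unfolding k'_def bij_betw_def by (auto intro!: inv_into_into)
  have "k \<omega> = e (k' \<omega>)" if "\<omega> \<in> \<Omega>" for \<omega> using k'_iff[OF that] k'_im that by blast
  hence k'_inj: "k' \<omega> = k' \<omega>' \<longleftrightarrow> k \<omega> = k \<omega>'" if "\<omega> \<in> \<Omega>" "\<omega>' \<in> \<Omega>" for \<omega> \<omega>'
    using that unfolding k'_def by metis
  define q where "q y j = (if j < m then \<kappa> y (e j) else 0)" for y j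
  have "(\<Sum>j<m. \<kappa> y (e j)) = 1" for y using sum.reindex_bij_betw[OF e, of "\<kappa> y"] \<kappa>1 by simp
  hence tc: "test_channel m q" unfolding test_channel_def q_def using \<kappa>0 by auto
  have "law \<Omega> P (\<lambda>\<omega>. (f \<omega>, g \<omega>, k' \<omega>)) (a, b, j) = pi1 p \<delta> a b * q b j" if "j < m" for a b j
  proof -
    have "law \<Omega> P (\<lambda>\<omega>. (f \<omega>, g \<omega>, k' \<omega>)) (a, b, j) = law \<Omega> P (\<lambda>\<omega>. (f \<omega>, g \<omega>, k \<omega>)) (a, b, e j)"
      using k'_iff[OF _ that] by (intro law_relabel) auto
    thus ?thesis using fac[of "e j"] e that unfolding q_def bij_betw_def by auto
  qed
  note ents = single_letter_entropies[OF pm k'_im tc this]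
  have "ent \<Omega> P k' = ent \<Omega> P k" "ent \<Omega> P (\<lambda>\<omega>. (f \<omega>, k' \<omega>)) = ent \<Omega> P (\<lambda>\<omega>. (f \<omega>, k \<omega>))"
    "ent \<Omega> P (\<lambda>\<omega>. (g \<omega>, k' \<omega>)) = ent \<Omega> P (\<lambda>\<omega>. (g \<omega>, k \<omega>))"
    using k'_inj by (auto intro!: ent_relabel)
  thus ?thesis using Gmin_le_H_ZU[OF tc order_refl] ents by simp
qed

end

section \<open>Block systems: \<open>n\<close> source letters and an arbitrary output kernel\<close>

lemma seqs_0: "seqs 0 = {[]}" unfolding seqs_def by auto

lemma seqs_Suc: "seqs (Suc n) = (\<lambda>(b, l). b # l) ` (UNIV \<times> seqs n)"
  unfolding seqs_def by (auto simp: image_iff length_Suc_conv)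

lemma finite_seqs: "finite (seqs n)"
  by (induction n) (auto simp: seqs_0 seqs_Suc)

lemma card_seqs: "card (seqs n) = 2 ^ n"
  using card_lists_length_eq[of "UNIV :: bool set" n] unfolding seqs_def by simp

lemma Cons_seqs: "b # l \<in> seqs (Suc n) \<longleftrightarrow> l \<in> seqs n"
  unfolding seqs_def by auto

lemma seqs_SucE: "x \<in> seqs (Suc n) \<Longrightarrow> (\<And>b l. x = b # l \<Longrightarrow> l \<in> seqs n \<Longrightarrow> thesis) \<Longrightarrow> thesis"
  unfolding seqs_def by (cases x) auto

lemma seqs_Suc_hd_tl: "l \<in> seqs (Suc n) \<Longrightarrow> hd l # tl l = l \<and> tl l \<in> seqs n"
  unfolding seqs_def by (cases l) auto

lemma seqs_Suc_eq: "l \<in> seqs (Suc n) \<Longrightarrow> l' \<in> seqs (Suc n) \<Longrightarrow> l = l' \<longleftrightarrow> hd l = hd l' \<and> tl l = tl l'"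
  unfolding seqs_def by (cases l; cases l') auto

lemma sum_seqs_Suc: "(\<Sum>x\<in>seqs (Suc n). f x) = (\<Sum>b\<in>UNIV. \<Sum>l\<in>seqs n. f (b # l))"
proof -
  have "inj_on (\<lambda>(b, l). b # l) (UNIV \<times> seqs n)" by (auto simp: inj_on_def)
  hence "(\<Sum>x\<in>seqs (Suc n). f x) = (\<Sum>(b, l)\<in>UNIV \<times> seqs n. f (b # l))"
    unfolding seqs_Suc by (simp add: sum.reindex case_prod_unfold)
  thus ?thesis by (simp add: sum.cartesian_product)
qed

definition pZYn :: "real \<Rightarrow> real \<Rightarrow> nat \<Rightarrow> bool list \<Rightarrow> bool list \<Rightarrow> real" where
  "pZYn p \<delta> n zs ys = (\<Prod>i<n. pi1 p \<delta> (zs ! i) (ys ! i))"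

definition pYn :: "real \<Rightarrow> real \<Rightarrow> nat \<Rightarrow> bool list \<Rightarrow> real" where
  "pYn p \<delta> n ys = (\<Sum>zs\<in>seqs n. pZYn p \<delta> n zs ys)"

lemma pZYn_Cons: "pZYn p \<delta> (Suc n) (a # zs) (b # ys) = pi1 p \<delta> a b * pZYn p \<delta> n zs ys"
  unfolding pZYn_def prod.lessThan_Suc_shift by simp

lemma pY1_pi1: "pY1 p \<delta> b = (\<Sum>a\<in>UNIV. pi1 p \<delta> a b)"
  unfolding pY1_def pi1_def by (simp add: sum_UNIV_bool)

lemma pYn_Cons: "pYn p \<delta> (Suc n) (b # ys) = pY1 p \<delta> b * pYn p \<delta> n ys"
  unfolding pYn_def pY1_pi1 sum_seqs_Suc pZYn_Cons by (simp add: sum_product)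

lemma sum_pY1: "(\<Sum>b\<in>UNIV. pY1 p \<delta> b) = 1"
  unfolding pY1_def by (simp add: sum_UNIV_bool algebra_simps)

lemma sum_pYn: "(\<Sum>ys\<in>seqs n. pYn p \<delta> n ys) = 1"
proof (induction n)
  case 0 thus ?case by (simp add: seqs_0 pYn_def pZYn_def)
next
  case (Suc n)
  thus ?case unfolding sum_seqs_Suc pYn_Cons
    by (simp add: sum_distrib_left[symmetric] sum_distrib_right[symmetric] sum_pY1)
qed

lemma sum_pZYn: "(\<Sum>zs\<in>seqs n. \<Sum>ys\<in>seqs n. pZYn p \<delta> n zs ys) = 1"
  using sum_pYn[of p \<delta> n] unfolding pYn_def by (subst sum.swap) simp

lemma pZYn_nonneg: "0 \<le> p \<Longrightarrow> p \<le> 1 \<Longrightarrow> 0 \<le> \<delta> \<Longrightarrow> \<delta> \<le> 1 \<Longrightarrow> 0 \<le> pZYn p \<delta> n zs ys"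
  unfolding pZYn_def using pi1_nonneg by (intro prod_nonneg) auto

lemma pYn_nonneg: "0 \<le> p \<Longrightarrow> p \<le> 1 \<Longrightarrow> 0 \<le> \<delta> \<Longrightarrow> \<delta> \<le> 1 \<Longrightarrow> 0 \<le> pYn p \<delta> n ys"
  unfolding pYn_def using pZYn_nonneg by (intro sum_nonneg) auto

text \<open>A block system consists of \<open>(Z\<^sup>n, Y\<^sub>1\<^sup>n)\<close> and an output \<open>W\<close> produced from \<open>Y\<^sub>1\<^sup>n\<close> by a
  stochastic kernel \<open>Q\<close>; the sample space is \<open>{0,1}\<^sup>n \<times> {0,1}\<^sup>n \<times> W\<close>.  The relay followed by
  the binary symmetric channel is such a kernel, with \<open>W = S\<^sup>n\<close>.\<close>
definition kernel_on :: "nat \<Rightarrow> 'w set \<Rightarrow> (bool list \<Rightarrow> 'w \<Rightarrow> real) \<Rightarrow> bool" where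
  "kernel_on n W Q \<longleftrightarrow> (\<forall>y w. 0 \<le> Q y w) \<and> (\<forall>y\<in>seqs n. (\<Sum>w\<in>W. Q y w) = 1)"

definition sys_space :: "nat \<Rightarrow> 'w set \<Rightarrow> (bool list \<times> bool list \<times> 'w) set" where
  "sys_space n W = seqs n \<times> seqs n \<times> W"

definition sys_pmf :: "real \<Rightarrow> real \<Rightarrow> nat \<Rightarrow> (bool list \<Rightarrow> 'w \<Rightarrow> real) \<Rightarrow> bool list \<times> bool list \<times> 'w \<Rightarrow> real" where
  "sys_pmf p \<delta> n Q \<omega> = pZYn p \<delta> n (fst \<omega>) (fst (snd \<omega>)) * Q (fst (snd \<omega>)) (snd (snd \<omega>))"

lemma kernel_on_nonneg: "kernel_on n W Q \<Longrightarrow> 0 \<le> Q y w" unfolding kernel_on_def by auto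
lemma kernel_on_sum: "kernel_on n W Q \<Longrightarrow> y \<in> seqs n \<Longrightarrow> (\<Sum>w\<in>W. Q y w) = 1" unfolding kernel_on_def by auto

lemma sum_sys_space: "(\<Sum>\<omega>\<in>sys_space n W. F \<omega>) = (\<Sum>z\<in>seqs n. \<Sum>y\<in>seqs n. \<Sum>w\<in>W. F (z, y, w))"
  unfolding sys_space_def by (simp add: sum.cartesian_product)

lemma finite_sys_space: "finite W \<Longrightarrow> finite (sys_space n W)"
  unfolding sys_space_def using finite_seqs by simp

lemma sys_pmf_pmf_on:
  assumes "0 \<le> p" "p \<le> 1" "0 \<le> \<delta>" "\<delta> \<le> 1" "finite W" "kernel_on n W Q"
  shows "pmf_on (sys_space n W) (sys_pmf p \<delta> n Q)"
proof -
  have "(\<Sum>\<omega>\<in>sys_space n W. sys_pmf p \<delta> n Q \<omega>) = (\<Sum>z\<in>seqs n. \<Sum>y\<in>seqs n. pZYn p \<delta> n z y * (\<Sum>w\<in>W. Q y w))"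
    unfolding sum_sys_space sys_pmf_def by (simp add: sum_distrib_left)
  also have "\<dots> = 1" using assms(6) sum_pZYn[of p \<delta> n] unfolding kernel_on_def by simp
  moreover have "0 \<le> sys_pmf p \<delta> n Q \<omega>" for \<omega>
    unfolding sys_pmf_def using assms pZYn_nonneg kernel_on_nonneg by (intro mult_nonneg_nonneg) auto
  ultimately show ?thesis unfolding pmf_on_def using finite_sys_space[OF assms(5)] by auto
qed

definition cond_ent_ZW :: "real \<Rightarrow> real \<Rightarrow> nat \<Rightarrow> 'w set \<Rightarrow> (bool list \<Rightarrow> 'w \<Rightarrow> real) \<Rightarrow> real" where
  "cond_ent_ZW p \<delta> n W Q = ent (sys_space n W) (sys_pmf p \<delta> n Q) (\<lambda>\<omega>. (fst \<omega>, snd (snd \<omega>)))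
     - ent (sys_space n W) (sys_pmf p \<delta> n Q) (\<lambda>\<omega>. snd (snd \<omega>))"

definition mutual_info_YW :: "real \<Rightarrow> real \<Rightarrow> nat \<Rightarrow> 'w set \<Rightarrow> (bool list \<Rightarrow> 'w \<Rightarrow> real) \<Rightarrow> real" where
  "mutual_info_YW p \<delta> n W Q = ent (sys_space n W) (sys_pmf p \<delta> n Q) (\<lambda>\<omega>. fst (snd \<omega>))
     + ent (sys_space n W) (sys_pmf p \<delta> n Q) (\<lambda>\<omega>. snd (snd \<omega>))
     - ent (sys_space n W) (sys_pmf p \<delta> n Q) (\<lambda>\<omega>. (fst (snd \<omega>), snd (snd \<omega>)))"

lemma cond_ent_ZW_nonneg:
  assumes "0 \<le> p" "p \<le> 1" "0 \<le> \<delta>" "\<delta> \<le> 1" "finite W" "kernel_on n W Q"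
  shows "0 \<le> cond_ent_ZW p \<delta> n W Q"
proof -
  have "ent (sys_space n W) (sys_pmf p \<delta> n Q) (\<lambda>\<omega>. snd (snd \<omega>))
        \<le> ent (sys_space n W) (sys_pmf p \<delta> n Q) (\<lambda>\<omega>. (fst \<omega>, snd (snd \<omega>)))"
    by (rule ent_mono_snd[OF sys_pmf_pmf_on[OF assms]])
  thus ?thesis unfolding cond_ent_ZW_def by simp
qed

lemma mutual_info_YW_nonneg:
  assumes "0 \<le> p" "p \<le> 1" "0 \<le> \<delta>" "\<delta> \<le> 1" "finite W" "kernel_on n W Q"
  shows "0 \<le> mutual_info_YW p \<delta> n W Q"
proof -
  have "ent (sys_space n W) (sys_pmf p \<delta> n Q) (\<lambda>\<omega>. (fst (snd \<omega>), snd (snd \<omega>))) \<le>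
        ent (sys_space n W) (sys_pmf p \<delta> n Q) (\<lambda>\<omega>. fst (snd \<omega>)) + ent (sys_space n W) (sys_pmf p \<delta> n Q) (\<lambda>\<omega>. snd (snd \<omega>))"
    by (rule subadd[OF sys_pmf_pmf_on[OF assms]])
  thus ?thesis unfolding mutual_info_YW_def by linarith
qed

section \<open>Peeling off the first letter of a block system\<close>

definition zhd :: "bool list \<times> bool list \<times> 'w \<Rightarrow> bool" where "zhd \<omega> = hd (fst \<omega>)"
definition ztl :: "bool list \<times> bool list \<times> 'w \<Rightarrow> bool list" where "ztl \<omega> = tl (fst \<omega>)"
definition yhd :: "bool list \<times> bool list \<times> 'w \<Rightarrow> bool" where "yhd \<omega> = hd (fst (snd \<omega>))"
definition ytl :: "bool list \<times> bool list \<times> 'w \<Rightarrow> bool list" where "ytl \<omega> = tl (fst (snd \<omega>))"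
definition wout :: "bool list \<times> bool list \<times> 'w \<Rightarrow> 'w" where "wout \<omega> = snd (snd \<omega>)"

lemma bij_tail: "bij_betw (\<lambda>((zr, yr, c), (a, b)). (a # zr, b # yr, c))
    (sys_space n W \<times> (UNIV \<times> UNIV)) (sys_space (Suc n) W)"
  by (rule bij_betw_byWitness[where f'="\<lambda>(z, y, c). ((tl z, tl y, c), (hd z, hd y))"])
     (auto simp: sys_space_def Cons_seqs seqs_Suc_hd_tl)

lemma bij_obs: "bij_betw (\<lambda>((b, yr, u), (a, zl, w)). (a # zl, b # yr, w))
    ((UNIV \<times> seqs n \<times> {()}) \<times> (UNIV \<times> seqs n \<times> W)) (sys_space (Suc n) W)"
  by (rule bij_betw_byWitness[where f'="\<lambda>(z, y, c). ((hd y, tl y, ()), (hd z, tl z, c))"])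
     (auto simp: sys_space_def Cons_seqs seqs_Suc_hd_tl)

lemma bij_markov: "bij_betw (\<lambda>((a, zr, yr, c), b). (a # zr, b # yr, c))
    ((UNIV \<times> seqs n \<times> seqs n \<times> W) \<times> UNIV) (sys_space (Suc n) W)"
  by (rule bij_betw_byWitness[where f'="\<lambda>(z, y, c). ((hd z, tl z, tl y, c), hd y)"])
     (auto simp: sys_space_def Cons_seqs seqs_Suc_hd_tl)

lemma bij_head: "bij_betw (\<lambda>((a, b, yr, c), zl). (a # zl, b # yr, c))
    ((UNIV \<times> UNIV \<times> seqs n \<times> W) \<times> seqs n) (sys_space (Suc n) W)"
  by (rule bij_betw_byWitness[where f'="\<lambda>(z, y, c). ((hd z, hd y, tl y, c), tl z)"])
     (auto simp: sys_space_def Cons_seqs seqs_Suc_hd_tl)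

definition tail_kernel :: "real \<Rightarrow> real \<Rightarrow> (bool list \<Rightarrow> 'w \<Rightarrow> real) \<Rightarrow> bool list \<Rightarrow> 'w \<Rightarrow> real" where
  "tail_kernel p \<delta> Q ys w = (\<Sum>b\<in>UNIV. pY1 p \<delta> b * Q (b # ys) w)"

locale block_step = binary_source +
  fixes W :: "'w set" and Q :: "bool list \<Rightarrow> 'w \<Rightarrow> real" and n :: nat
  assumes finW: "finite W" and kQ: "kernel_on (Suc n) W Q"
begin

abbreviation "\<Omega> \<equiv> sys_space (Suc n) W"
abbreviation "P \<equiv> sys_pmf p \<delta> (Suc n) Q"

lemma pm: "pmf_on \<Omega> P" by (rule sys_pmf_pmf_on[OF params finW kQ])

lemma P_Cons: "P (a # zr, b # yr, c) = pi1 p \<delta> a b * pZYn p \<delta> n zr yr * Q (b # yr) c"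
  unfolding sys_pmf_def by (simp add: pZYn_Cons)

lemma in_space: "\<omega> \<in> \<Omega> \<Longrightarrow> fst \<omega> \<in> seqs (Suc n) \<and> fst (snd \<omega>) \<in> seqs (Suc n) \<and> snd (snd \<omega>) \<in> W"
  unfolding sys_space_def by (cases \<omega>) auto

lemma images: "ztl ` \<Omega> \<subseteq> seqs n" "ytl ` \<Omega> \<subseteq> seqs n" "wout ` \<Omega> \<subseteq> W"
  using in_space seqs_Suc_hd_tl unfolding ztl_def ytl_def wout_def by blast+

lemma tail_kernel_on: "kernel_on n W (tail_kernel p \<delta> Q)"
  unfolding kernel_on_def
proof (intro conjI allI ballI)
  fix y w show "0 \<le> tail_kernel p \<delta> Q y w" unfolding tail_kernel_def pY1_pi1
    using kernel_on_nonneg[OF kQ] pi1_nonneg[OF params] by (intro sum_nonneg mult_nonneg_nonneg) auto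
next
  fix y assume "y \<in> seqs n"
  hence "(\<Sum>w\<in>W. Q (b # y) w) = 1" for b by (simp add: kernel_on_sum[OF kQ] Cons_seqs)
  thus "(\<Sum>w\<in>W. tail_kernel p \<delta> Q y w) = 1"
    unfolding tail_kernel_def by (subst sum.swap) (simp add: sum_distrib_left[symmetric] sum_pY1)
qed

lemma tail_law:
  assumes "x \<in> sys_space n W"
  shows "law \<Omega> P (\<lambda>\<omega>. (ztl \<omega>, ytl \<omega>, wout \<omega>)) x = sys_pmf p \<delta> n (tail_kernel p \<delta> Q) x"
proof -
  obtain zr yr c where x: "x = (zr, yr, c)" by (cases x) auto
  have "law \<Omega> P (\<lambda>\<omega>. (ztl \<omega>, ytl \<omega>, wout \<omega>)) x
        = (\<Sum>m\<in>UNIV \<times> UNIV. P ((\<lambda>((zr, yr, c), (a, b)). (a # zr, b # yr, c)) (x, m)))"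
    by (rule law_proj[OF bij_tail]) (auto simp: ztl_def ytl_def wout_def assms finite_sys_space[OF finW])
  also have "\<dots> = sys_pmf p \<delta> n (tail_kernel p \<delta> Q) x"
    unfolding x by (simp add: sum_UNIV_bool_pair sum_UNIV_bool pZYn_Cons sys_pmf_def tail_kernel_def
        pY1_pi1 algebra_simps)
  finally show ?thesis .
qed

lemma tail_entropies:
  "cond_ent_ZW p \<delta> n W (tail_kernel p \<delta> Q) = ent \<Omega> P (\<lambda>\<omega>. (ztl \<omega>, wout \<omega>)) - ent \<Omega> P wout"
  "mutual_info_YW p \<delta> n W (tail_kernel p \<delta> Q) = ent \<Omega> P ytl + ent \<Omega> P wout - ent \<Omega> P (\<lambda>\<omega>. (ytl \<omega>, wout \<omega>))"
proof -
  have im: "(\<lambda>\<omega>. (ztl \<omega>, ytl \<omega>, wout \<omega>)) ` \<Omega> \<subseteq> sys_space n W"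
    using images unfolding sys_space_def by auto
  note T = ent_marginal[OF pm finite_sys_space[OF finW] im tail_law]
  show "cond_ent_ZW p \<delta> n W (tail_kernel p \<delta> Q) = ent \<Omega> P (\<lambda>\<omega>. (ztl \<omega>, wout \<omega>)) - ent \<Omega> P wout"
    unfolding cond_ent_ZW_def using T[of "\<lambda>\<omega>. (fst \<omega>, snd (snd \<omega>))"] T[of "\<lambda>\<omega>. snd (snd \<omega>)"]
    by simp
  show "mutual_info_YW p \<delta> n W (tail_kernel p \<delta> Q) = ent \<Omega> P ytl + ent \<Omega> P wout - ent \<Omega> P (\<lambda>\<omega>. (ytl \<omega>, wout \<omega>))"
    unfolding mutual_info_YW_def using T[of "\<lambda>\<omega>. fst (snd \<omega>)"] T[of "\<lambda>\<omega>. snd (snd \<omega>)"]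
      T[of "\<lambda>\<omega>. (fst (snd \<omega>), snd (snd \<omega>))"] by simp
qed

lemma split_entropies:
  "cond_ent_ZW p \<delta> (Suc n) W Q = ent \<Omega> P (\<lambda>\<omega>. (zhd \<omega>, ztl \<omega>, wout \<omega>)) - ent \<Omega> P wout"
  "mutual_info_YW p \<delta> (Suc n) W Q = ent \<Omega> P (\<lambda>\<omega>. (yhd \<omega>, ytl \<omega>)) + ent \<Omega> P wout
     - ent \<Omega> P (\<lambda>\<omega>. (yhd \<omega>, ytl \<omega>, wout \<omega>))"
proof -
  have "ent \<Omega> P (\<lambda>\<omega>. (fst \<omega>, snd (snd \<omega>))) = ent \<Omega> P (\<lambda>\<omega>. (zhd \<omega>, ztl \<omega>, wout \<omega>))"
    "ent \<Omega> P (\<lambda>\<omega>. fst (snd \<omega>)) = ent \<Omega> P (\<lambda>\<omega>. (yhd \<omega>, ytl \<omega>))"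
    "ent \<Omega> P (\<lambda>\<omega>. (fst (snd \<omega>), snd (snd \<omega>))) = ent \<Omega> P (\<lambda>\<omega>. (yhd \<omega>, ytl \<omega>, wout \<omega>))"
    by (rule ent_relabel;
        auto simp: zhd_def ztl_def yhd_def ytl_def wout_def seqs_Suc_eq dest!: in_space)+
  thus "cond_ent_ZW p \<delta> (Suc n) W Q = ent \<Omega> P (\<lambda>\<omega>. (zhd \<omega>, ztl \<omega>, wout \<omega>)) - ent \<Omega> P wout"
    "mutual_info_YW p \<delta> (Suc n) W Q = ent \<Omega> P (\<lambda>\<omega>. (yhd \<omega>, ytl \<omega>)) + ent \<Omega> P wout
     - ent \<Omega> P (\<lambda>\<omega>. (yhd \<omega>, ytl \<omega>, wout \<omega>))"
    unfolding cond_ent_ZW_def mutual_info_YW_def wout_def by simp_all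
qed

text \<open>The observations are i.i.d., so the first one is independent of the others.\<close>
lemma obs_independent: "ent \<Omega> P (\<lambda>\<omega>. (yhd \<omega>, ytl \<omega>)) = ent \<Omega> P yhd + ent \<Omega> P ytl"
proof -
  have "ent \<Omega> P (\<lambda>\<omega>. (yhd \<omega>, ytl \<omega>, ())) + ent \<Omega> P (\<lambda>\<omega>. ()) =
        ent \<Omega> P (\<lambda>\<omega>. (yhd \<omega>, ())) + ent \<Omega> P (\<lambda>\<omega>. (ytl \<omega>, ()))"
  proof (rule markov_eq[OF pm finite_bool_UNIV finite_seqs finite.insertI[OF finite.emptyI] _ images(2),
        where \<alpha>="\<lambda>b u. pY1 p \<delta> b" and \<beta>="\<lambda>yr u. pYn p \<delta> n yr"])
    fix b yr u assume a: "b \<in> (UNIV :: bool set)" "yr \<in> seqs n" "u \<in> {()}"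
    have "law \<Omega> P (\<lambda>\<omega>. (yhd \<omega>, ytl \<omega>, ())) (b, yr, u) =
          (\<Sum>m\<in>UNIV \<times> seqs n \<times> W. P ((\<lambda>((b, yr, u), (a, zl, w)). (a # zl, b # yr, w)) ((b, yr, u), m)))"
      by (rule law_proj[OF bij_obs]) (use a in \<open>auto simp: yhd_def ytl_def finite_seqs finW\<close>)
    also have "\<dots> = (\<Sum>a\<in>UNIV. \<Sum>zl\<in>seqs n. \<Sum>w\<in>W. pi1 p \<delta> a b * pZYn p \<delta> n zl yr * Q (b # yr) w)"
      by (simp only: sum.cartesian_product) (rule sum.cong[OF refl], clarsimp simp: P_Cons)
    also have "\<dots> = (\<Sum>a\<in>UNIV. \<Sum>zl\<in>seqs n. pi1 p \<delta> a b * pZYn p \<delta> n zl yr)"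
      using kernel_on_sum[OF kQ, of "b # yr"] a(2) by (simp add: sum_distrib_left[symmetric] Cons_seqs)
    also have "\<dots> = pY1 p \<delta> b * pYn p \<delta> n yr"
      unfolding pY1_pi1 pYn_def sum_product ..
    finally show "law \<Omega> P (\<lambda>\<omega>. (yhd \<omega>, ytl \<omega>, ())) (b, yr, u) = pY1 p \<delta> b * pYn p \<delta> n yr" .
  qed auto
  moreover have "ent \<Omega> P (\<lambda>\<omega>. (yhd \<omega>, ytl \<omega>, ())) = ent \<Omega> P (\<lambda>\<omega>. (yhd \<omega>, ytl \<omega>))"
    "ent \<Omega> P (\<lambda>\<omega>. (yhd \<omega>, ())) = ent \<Omega> P yhd" "ent \<Omega> P (\<lambda>\<omega>. (ytl \<omega>, ())) = ent \<Omega> P ytl"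
    by (rule ent_relabel; auto)+
  ultimately show ?thesis using ent_const[OF pm, of "()"] by simp
qed

text \<open>Given the remaining observations and the output, the first source letter is
  independent of the remaining source letters, \<open>zhd - (ytl, wout) - ztl\<close>; hence
  \<open>H(zhd, ztl | wout) \<ge> H(ztl | wout) + H(zhd | ytl, wout)\<close>.\<close>
lemma head_markov:
  "(ent \<Omega> P (\<lambda>\<omega>. (ztl \<omega>, wout \<omega>)) - ent \<Omega> P wout)
     + (ent \<Omega> P (\<lambda>\<omega>. (zhd \<omega>, ytl \<omega>, wout \<omega>)) - ent \<Omega> P (\<lambda>\<omega>. (ytl \<omega>, wout \<omega>)))
   \<le> ent \<Omega> P (\<lambda>\<omega>. (zhd \<omega>, ztl \<omega>, wout \<omega>)) - ent \<Omega> P wout"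
proof (rule cond_ent_markov_bound[OF pm finite_bool_UNIV finite_seqs finite_seqs finW _ images(1,2,3),
      where \<alpha>="\<lambda>a kc. \<Sum>b\<in>UNIV. pi1 p \<delta> a b * Q (b # fst kc) (snd kc)"
        and \<beta>="\<lambda>zr kc. pZYn p \<delta> n zr (fst kc)"])
  fix a zr yr c assume a: "a \<in> (UNIV :: bool set)" "zr \<in> seqs n" "yr \<in> seqs n" "c \<in> W"
  have "law \<Omega> P (\<lambda>\<omega>. (zhd \<omega>, ztl \<omega>, ytl \<omega>, wout \<omega>)) (a, zr, yr, c) =
        (\<Sum>b\<in>UNIV. P ((\<lambda>((a, zr, yr, c), b). (a # zr, b # yr, c)) ((a, zr, yr, c), b)))"
    by (rule law_proj[OF bij_markov])
      (use a in \<open>auto simp: zhd_def ztl_def ytl_def wout_def finite_seqs finW\<close>)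
  also have "\<dots> = (\<Sum>b\<in>UNIV. pi1 p \<delta> a b * Q (b # yr) c) * pZYn p \<delta> n zr yr"
    by (simp add: P_Cons sum_UNIV_bool algebra_simps)
  finally show "law \<Omega> P (\<lambda>\<omega>. (zhd \<omega>, ztl \<omega>, ytl \<omega>, wout \<omega>)) (a, zr, yr, c) =
     (\<Sum>b\<in>UNIV. pi1 p \<delta> a b * Q (b # fst (yr, c)) (snd (yr, c))) * pZYn p \<delta> n zr (fst (yr, c))"
    by simp
qed auto

text \<open>The first letter is an instance of the single-letter bound, with auxiliary variable
  \<open>U = (ytl, wout)\<close>: the chain \<open>zhd - yhd - U\<close> is Markov.\<close>
lemma head_single_letter:
  "Gmin (ent \<Omega> P yhd + ent \<Omega> P (\<lambda>\<omega>. (ytl \<omega>, wout \<omega>)) - ent \<Omega> P (\<lambda>\<omega>. (yhd \<omega>, ytl \<omega>, wout \<omega>)))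
   \<le> ent \<Omega> P (\<lambda>\<omega>. (zhd \<omega>, ytl \<omega>, wout \<omega>)) - ent \<Omega> P (\<lambda>\<omega>. (ytl \<omega>, wout \<omega>))"
proof (rule single_letter_bound[OF pm finite_cartesian_product[OF finite_seqs finW],
      where \<kappa>="\<lambda>b u. pYn p \<delta> n (fst u) * Q (b # fst u) (snd u)"])
  show "(\<lambda>\<omega>. (ytl \<omega>, wout \<omega>)) ` \<Omega> \<subseteq> seqs n \<times> W" using images by auto
  fix b u show "0 \<le> pYn p \<delta> n (fst u) * Q (b # fst u) (snd u)"
    using pYn_nonneg[OF params] kernel_on_nonneg[OF kQ] by (intro mult_nonneg_nonneg)
next
  fix b
  have "(\<Sum>u\<in>seqs n \<times> W. pYn p \<delta> n (fst u) * Q (b # fst u) (snd u)) =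
        (\<Sum>yr\<in>seqs n. pYn p \<delta> n yr * (\<Sum>w\<in>W. Q (b # yr) w))"
    by (simp add: sum.cartesian_product sum_distrib_left case_prod_unfold)
  also have "\<dots> = 1" using kernel_on_sum[OF kQ] sum_pYn by (simp add: Cons_seqs)
  finally show "(\<Sum>u\<in>seqs n \<times> W. pYn p \<delta> n (fst u) * Q (b # fst u) (snd u)) = 1" .
next
  fix a b u assume u: "u \<in> seqs n \<times> W"
  then obtain yr c where kc: "u = (yr, c)" "yr \<in> seqs n" "c \<in> W" by auto
  have "law \<Omega> P (\<lambda>\<omega>. (zhd \<omega>, yhd \<omega>, ytl \<omega>, wout \<omega>)) (a, b, yr, c) =
        (\<Sum>zl\<in>seqs n. P ((\<lambda>((a, b, yr, c), zl). (a # zl, b # yr, c)) ((a, b, yr, c), zl)))"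
    by (rule law_proj[OF bij_head])
      (use kc in \<open>auto simp: zhd_def yhd_def ytl_def wout_def finite_seqs finW\<close>)
  also have "\<dots> = pi1 p \<delta> a b * (pYn p \<delta> n yr * Q (b # yr) c)"
    unfolding pYn_def by (simp add: P_Cons sum_distrib_left sum_distrib_right algebra_simps)
  finally show "law \<Omega> P (\<lambda>\<omega>. (zhd \<omega>, yhd \<omega>, (ytl \<omega>, wout \<omega>))) (a, b, u) =
      pi1 p \<delta> a b * (pYn p \<delta> n (fst u) * Q (b # fst u) (snd u))"
    using kc by simp
qed

end

context binary_source
begin

text \<open>The converse for block systems, by induction on the block length: peel off the first
  letter, bound it by the single-letter bound, and recombine using convexity of \<open>Gmin\<close>:
  \<open>n Gmin(I(Y\<^sub>1\<^sup>n; W) / n) \<le> H(Z\<^sup>n | W)\<close>.\<close>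
theorem block_converse:
  "finite W \<Longrightarrow> kernel_on n W Q \<Longrightarrow> real n * Gmin (mutual_info_YW p \<delta> n W Q / real n) \<le> cond_ent_ZW p \<delta> n W Q"
proof (induction n arbitrary: Q)
  case 0
  thus ?case using cond_ent_ZW_nonneg[OF params] by simp
next
  case (Suc n)
  interpret block_step p \<delta> W Q n by unfold_locales (use Suc.prems in auto)
  define I2 where "I2 = ent \<Omega> P yhd + ent \<Omega> P (\<lambda>\<omega>. (ytl \<omega>, wout \<omega>)) - ent \<Omega> P (\<lambda>\<omega>. (yhd \<omega>, ytl \<omega>, wout \<omega>))"
  have I2: "0 \<le> I2" unfolding I2_def using subadd[OF pm, of yhd "\<lambda>\<omega>. (ytl \<omega>, wout \<omega>)"] by simp
  have I: "mutual_info_YW p \<delta> (Suc n) W Q = mutual_info_YW p \<delta> n W (tail_kernel p \<delta> Q) + I2"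
    unfolding split_entropies tail_entropies obs_independent I2_def by simp
  have "real (Suc n) * Gmin (mutual_info_YW p \<delta> (Suc n) W Q / real (Suc n))
        \<le> real n * Gmin (mutual_info_YW p \<delta> n W (tail_kernel p \<delta> Q) / real n) + Gmin I2"
    unfolding I by (rule Gmin_average[OF mutual_info_YW_nonneg[OF params finW tail_kernel_on] I2])
  also have "\<dots> \<le> cond_ent_ZW p \<delta> n W (tail_kernel p \<delta> Q)
      + (ent \<Omega> P (\<lambda>\<omega>. (zhd \<omega>, ytl \<omega>, wout \<omega>)) - ent \<Omega> P (\<lambda>\<omega>. (ytl \<omega>, wout \<omega>)))"
    using Suc.IH[OF finW tail_kernel_on] head_single_letter unfolding I2_def by linarith
  also have "\<dots> \<le> cond_ent_ZW p \<delta> (Suc n) W Q"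
    unfolding split_entropies tail_entropies using head_markov by linarith
  finally show ?case .
qed

end

section \<open>The relay channel\<close>

definition bsc_n :: "real \<Rightarrow> nat \<Rightarrow> bool list \<Rightarrow> bool list \<Rightarrow> real" where
  "bsc_n \<epsilon> n s x = (\<Prod>i<n. ber \<epsilon> (bxor (s ! i) (x ! i)))"

lemma bsc_n_Cons: "bsc_n \<epsilon> (Suc n) (a # s) (b # x) = ber \<epsilon> (bxor a b) * bsc_n \<epsilon> n s x"
  unfolding bsc_n_def prod.lessThan_Suc_shift by simp

lemma bsc_n_nonneg: "0 \<le> \<epsilon> \<Longrightarrow> \<epsilon> \<le> 1 \<Longrightarrow> 0 \<le> bsc_n \<epsilon> n s x"
  unfolding bsc_n_def by (intro prod_nonneg) (auto intro: ber_nonneg)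

lemma sum_ber_xor: "(\<Sum>a\<in>UNIV. ber \<epsilon> (bxor a b)) = 1"
  by (cases b) (simp_all add: sum_UNIV_bool)

lemma sum_bsc_n: "x \<in> seqs n \<Longrightarrow> (\<Sum>s\<in>seqs n. bsc_n \<epsilon> n s x) = 1"
proof (induction n arbitrary: x)
  case 0 thus ?case by (simp add: seqs_0 bsc_n_def)
next
  case (Suc n)
  from Suc.prems obtain b x' where x: "x = b # x'" "x' \<in> seqs n" by (rule seqs_SucE)
  have "(\<Sum>s\<in>seqs (Suc n). bsc_n \<epsilon> (Suc n) s x) = (\<Sum>a\<in>UNIV. ber \<epsilon> (bxor a b) * (\<Sum>s\<in>seqs n. bsc_n \<epsilon> n s x'))"
    unfolding sum_seqs_Suc x(1) bsc_n_Cons by (simp add: sum_distrib_left)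
  thus ?case using Suc.IH[OF x(2)] sum_ber_xor by simp
qed

lemma xlogx_mult: "0 \<le> a \<Longrightarrow> 0 \<le> b \<Longrightarrow> a * b * log 2 (a * b) = a * b * log 2 a + a * b * log 2 b"
  by (cases "a = 0 \<or> b = 0") (auto simp: log_mult distrib_left)

lemma bsc_n_ent:
  assumes "0 \<le> \<epsilon>" "\<epsilon> \<le> 1"
  shows "x \<in> seqs n \<Longrightarrow> (\<Sum>s\<in>seqs n. bsc_n \<epsilon> n s x * log 2 (bsc_n \<epsilon> n s x)) = - (real n * bin_ent \<epsilon>)"
proof (induction n arbitrary: x)
  case 0 thus ?case by (simp add: seqs_0 bsc_n_def)
next
  case (Suc n)
  from Suc.prems obtain b x' where x: "x = b # x'" "x' \<in> seqs n" by (rule seqs_SucE)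
  have ber_log: "(\<Sum>a\<in>UNIV. ber \<epsilon> (bxor a b) * log 2 (ber \<epsilon> (bxor a b))) = - bin_ent \<epsilon>"
    by (cases b) (simp_all add: sum_UNIV_bool bin_ent_eq)
  have "(\<Sum>s\<in>seqs (Suc n). bsc_n \<epsilon> (Suc n) s x * log 2 (bsc_n \<epsilon> (Suc n) s x)) =
        (\<Sum>a\<in>UNIV. \<Sum>s\<in>seqs n. ber \<epsilon> (bxor a b) * bsc_n \<epsilon> n s x' * log 2 (ber \<epsilon> (bxor a b))
           + ber \<epsilon> (bxor a b) * (bsc_n \<epsilon> n s x' * log 2 (bsc_n \<epsilon> n s x')))"
    unfolding sum_seqs_Suc x(1) bsc_n_Cons
    using xlogx_mult[OF ber_nonneg[OF assms] bsc_n_nonneg[OF assms]] by (simp add: algebra_simps)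
  also have "\<dots> = (\<Sum>a\<in>UNIV. ber \<epsilon> (bxor a b) * log 2 (ber \<epsilon> (bxor a b)) * (\<Sum>s\<in>seqs n. bsc_n \<epsilon> n s x')
           + ber \<epsilon> (bxor a b) * (\<Sum>s\<in>seqs n. bsc_n \<epsilon> n s x' * log 2 (bsc_n \<epsilon> n s x')))"
    by (simp add: sum.distrib sum_distrib_left sum_distrib_right algebra_simps)
  also have "\<dots> = - bin_ent \<epsilon> - real n * bin_ent \<epsilon>"
    using Suc.IH[OF x(2)] sum_bsc_n[OF x(2)] ber_log sum_ber_xor[of \<epsilon> b]
    by (simp add: sum.distrib sum_subtractf sum_distrib_right[symmetric])
  finally show ?case by (simp add: algebra_simps)
qed

definition relay_output :: "real \<Rightarrow> nat \<Rightarrow> (bool list \<Rightarrow> bool list \<Rightarrow> real) \<Rightarrow> bool list \<Rightarrow> bool list \<Rightarrow> real" where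
  "relay_output \<epsilon> n K y s = (\<Sum>x\<in>seqs n. K y x * bsc_n \<epsilon> n s x)"

lemma joint_eq: "joint p \<delta> \<epsilon> n K z y x s = pZYn p \<delta> n z y * K y x * bsc_n \<epsilon> n s x"
  unfolding joint_def pZYn_def pi1_def bsc_n_def ..

definition relay_space :: "nat \<Rightarrow> (bool list \<times> bool list \<times> bool list \<times> bool list) set" where
  "relay_space n = seqs n \<times> seqs n \<times> seqs n \<times> seqs n"

definition relay_pmf :: "real \<Rightarrow> real \<Rightarrow> real \<Rightarrow> nat \<Rightarrow> (bool list \<Rightarrow> bool list \<Rightarrow> real)
    \<Rightarrow> bool list \<times> bool list \<times> bool list \<times> bool list \<Rightarrow> real" where
  "relay_pmf p \<delta> \<epsilon> n K \<omega> = joint p \<delta> \<epsilon> n K (fst \<omega>) (fst (snd \<omega>)) (fst (snd (snd \<omega>))) (snd (snd (snd \<omega>)))"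

lemma sum_relay_space:
  "(\<Sum>\<omega>\<in>relay_space n. F \<omega>) = (\<Sum>z\<in>seqs n. \<Sum>y\<in>seqs n. \<Sum>x\<in>seqs n. \<Sum>s\<in>seqs n. F (z, y, x, s))"
  unfolding relay_space_def by (simp add: sum.cartesian_product)

locale relay_system =
  fixes p \<delta> \<epsilon> :: real and n :: nat and K :: "bool list \<Rightarrow> bool list \<Rightarrow> real"
  assumes relay_params: "0 \<le> p" "p \<le> 1" "0 \<le> \<delta>" "\<delta> \<le> 1" "0 \<le> \<epsilon>" "\<epsilon> \<le> 1"
    and K: "relay_kernel n K"
begin

abbreviation "\<Omega>4 \<equiv> relay_space n"
abbreviation "P4 \<equiv> relay_pmf p \<delta> \<epsilon> n K"
abbreviation "Qs \<equiv> relay_output \<epsilon> n K"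

lemma K_nonneg: "0 \<le> K y x" and K_sum: "y \<in> seqs n \<Longrightarrow> (\<Sum>x\<in>seqs n. K y x) = 1"
  using K unfolding relay_kernel_def by auto

lemma pm4: "pmf_on \<Omega>4 P4"
proof -
  have "(\<Sum>\<omega>\<in>\<Omega>4. P4 \<omega>) =
        (\<Sum>z\<in>seqs n. \<Sum>y\<in>seqs n. pZYn p \<delta> n z y * (\<Sum>x\<in>seqs n. K y x * (\<Sum>s\<in>seqs n. bsc_n \<epsilon> n s x)))"
    unfolding sum_relay_space relay_pmf_def joint_eq by (simp add: sum_distrib_left mult.assoc)
  also have "\<dots> = 1" using sum_bsc_n K_sum sum_pZYn by simp
  finally show ?thesis unfolding pmf_on_def relay_space_def using relay_params K_nonneg pZYn_nonneg bsc_n_nonneg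
    by (auto simp: relay_pmf_def joint_eq finite_seqs intro!: mult_nonneg_nonneg)
qed

lemma out_kernel: "kernel_on n (seqs n) Qs"
  unfolding kernel_on_def
proof (intro conjI allI ballI)
  fix y s show "0 \<le> Qs y s" unfolding relay_output_def using K_nonneg bsc_n_nonneg relay_params
    by (intro sum_nonneg mult_nonneg_nonneg) auto
next
  fix y assume y: "y \<in> seqs n"
  have "(\<Sum>s\<in>seqs n. Qs y s) = (\<Sum>x\<in>seqs n. K y x * (\<Sum>s\<in>seqs n. bsc_n \<epsilon> n s x))"
    unfolding relay_output_def by (subst sum.swap) (simp add: sum_distrib_left)
  also have "\<dots> = 1" using sum_bsc_n K_sum[OF y] by simp
  finally show "(\<Sum>s\<in>seqs n. Qs y s) = 1" .
qed

lemma H_Zn_Sn_block: "H_Zn_Sn p \<delta> \<epsilon> n K = cond_ent_ZW p \<delta> n (seqs n) Qs"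
proof -
  define \<Omega> where "\<Omega> = sys_space n (seqs n)"
  define P where "P = sys_pmf p \<delta> n Qs"
  have pm: "pmf_on \<Omega> P" unfolding \<Omega>_def P_def by (rule sys_pmf_pmf_on[OF relay_params(1-4) finite_seqs out_kernel])
  have im: "fst ` \<Omega> \<subseteq> seqs n" "(\<lambda>\<omega>. snd (snd \<omega>)) ` \<Omega> \<subseteq> seqs n" unfolding \<Omega>_def sys_space_def by auto
  have bij: "bij_betw (\<lambda>((z, s), y). (z, y, s)) ((seqs n \<times> seqs n) \<times> seqs n) \<Omega>"
    unfolding \<Omega>_def sys_space_def
    by (rule bij_betw_byWitness[where f'="\<lambda>(z, y, s). ((z, s), y)"]) auto
  have mZS: "law \<Omega> P (\<lambda>\<omega>. (fst \<omega>, snd (snd \<omega>))) (z, s) = pZS p \<delta> \<epsilon> n K z s"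
    if "z \<in> seqs n" "s \<in> seqs n" for z s
  proof -
    have "law \<Omega> P (\<lambda>\<omega>. (fst \<omega>, snd (snd \<omega>))) (z, s) = (\<Sum>y\<in>seqs n. P ((\<lambda>((z, s), y). (z, y, s)) ((z, s), y)))"
      by (rule law_proj[OF bij]) (use that in \<open>auto simp: finite_seqs\<close>)
    also have "\<dots> = pZS p \<delta> \<epsilon> n K z s"
      unfolding pZS_def P_def sys_pmf_def relay_output_def joint_eq by (simp add: sum_distrib_left mult.assoc)
    finally show ?thesis .
  qed
  have mS: "law \<Omega> P (\<lambda>\<omega>. snd (snd \<omega>)) s = pS p \<delta> \<epsilon> n K s" if "s \<in> seqs n" for s
    using law_marginal[OF pm finite_seqs im(1), of "\<lambda>\<omega>. snd (snd \<omega>)" s] mZS that by (simp add: pS_def)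
  have "H_Zn_Sn p \<delta> \<epsilon> n K = - (\<Sum>z\<in>seqs n. \<Sum>s\<in>seqs n.
          xlogxy (law \<Omega> P (\<lambda>\<omega>. (fst \<omega>, snd (snd \<omega>))) (z, s)) (law \<Omega> P (\<lambda>\<omega>. snd (snd \<omega>)) s))"
    unfolding H_Zn_Sn_def using mZS mS by simp
  also have "\<dots> = cond_ent_ZW p \<delta> n (seqs n) Qs"
    unfolding cond_ent_ZW_def \<Omega>_def[symmetric] P_def[symmetric]
    by (rule cond_ent_as_sum[OF pm finite_seqs finite_seqs im])
  finally show ?thesis .
qed

lemma mutual_info_relay:
  "mutual_info_YW p \<delta> n (seqs n) Qs = ent \<Omega>4 P4 (\<lambda>\<omega>. fst (snd \<omega>)) + ent \<Omega>4 P4 (\<lambda>\<omega>. snd (snd (snd \<omega>)))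
     - ent \<Omega>4 P4 (\<lambda>\<omega>. (fst (snd \<omega>), snd (snd (snd \<omega>))))"
proof -
  define \<rho> where "\<rho> \<omega> = (fst \<omega>, fst (snd \<omega>), snd (snd (snd \<omega>)))" for \<omega> :: "bool list \<times> bool list \<times> bool list \<times> bool list"
  have im: "\<rho> ` \<Omega>4 \<subseteq> sys_space n (seqs n)" unfolding \<rho>_def sys_space_def relay_space_def by auto
  have bij: "bij_betw (\<lambda>((z, y, s), x). (z, y, x, s)) (sys_space n (seqs n) \<times> seqs n) \<Omega>4"
    by (rule bij_betw_byWitness[where f'="\<lambda>(z, y, x, s). ((z, y, s), x)"])
      (auto simp: sys_space_def relay_space_def)
  have "law \<Omega>4 P4 \<rho> v = sys_pmf p \<delta> n Qs v" if "v \<in> sys_space n (seqs n)" for v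
  proof -
    obtain z y s where v: "v = (z, y, s)" by (cases v) auto
    have "law \<Omega>4 P4 \<rho> v = (\<Sum>x\<in>seqs n. P4 ((\<lambda>((z, y, s), x). (z, y, x, s)) ((z, y, s), x)))"
      unfolding v by (rule law_proj[OF bij]) (use that v in \<open>auto simp: \<rho>_def finite_sys_space finite_seqs\<close>)
    also have "\<dots> = sys_pmf p \<delta> n Qs v"
      unfolding v relay_pmf_def sys_pmf_def relay_output_def joint_eq by (simp add: sum_distrib_left mult.assoc)
    finally show ?thesis .
  qed
  note T = ent_marginal[OF pm4 finite_sys_space[OF finite_seqs] im this]
  show ?thesis unfolding mutual_info_YW_def
    using T[of "\<lambda>\<omega>. fst (snd \<omega>)"] T[of "\<lambda>\<omega>. snd (snd \<omega>)"] T[of "\<lambda>\<omega>. (fst (snd \<omega>), snd (snd \<omega>))"]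
    by (simp add: \<rho>_def)
qed

abbreviation Yr :: "bool list \<times> bool list \<times> bool list \<times> bool list \<Rightarrow> bool list" where
  "Yr \<omega> \<equiv> fst (snd \<omega>)"
abbreviation Xr :: "bool list \<times> bool list \<times> bool list \<times> bool list \<Rightarrow> bool list" where
  "Xr \<omega> \<equiv> fst (snd (snd \<omega>))"
abbreviation Sr :: "bool list \<times> bool list \<times> bool list \<times> bool list \<Rightarrow> bool list" where
  "Sr \<omega> \<equiv> snd (snd (snd \<omega>))"

lemma law_SXY:
  assumes "s \<in> seqs n" "x \<in> seqs n" "y \<in> seqs n"
  shows "law \<Omega>4 P4 (\<lambda>\<omega>. (Sr \<omega>, Xr \<omega>, Yr \<omega>)) (s, x, y) = pYn p \<delta> n y * K y x * bsc_n \<epsilon> n s x"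
proof -
  have bij: "bij_betw (\<lambda>((s, x, y), z). (z, y, x, s)) ((seqs n \<times> seqs n \<times> seqs n) \<times> seqs n) \<Omega>4"
    by (rule bij_betw_byWitness[where f'="\<lambda>(z, y, x, s). ((s, x, y), z)"]) (auto simp: relay_space_def)
  have "law \<Omega>4 P4 (\<lambda>\<omega>. (Sr \<omega>, Xr \<omega>, Yr \<omega>)) (s, x, y) =
        (\<Sum>z\<in>seqs n. P4 ((\<lambda>((s, x, y), z). (z, y, x, s)) ((s, x, y), z)))"
    by (rule law_proj[OF bij]) (use assms in \<open>auto simp: finite_seqs\<close>)
  also have "\<dots> = pYn p \<delta> n y * K y x * bsc_n \<epsilon> n s x"
    unfolding pYn_def relay_pmf_def joint_eq by (simp add: sum_distrib_right)
  finally show ?thesis .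
qed

lemma ent_SXY: "ent \<Omega>4 P4 (\<lambda>\<omega>. (Sr \<omega>, Xr \<omega>, Yr \<omega>)) = ent \<Omega>4 P4 (\<lambda>\<omega>. (Xr \<omega>, Yr \<omega>)) + real n * bin_ent \<epsilon>"
proof -
  define c where "c x y = pYn p \<delta> n y * K y x" for x y
  have c0: "0 \<le> c x y" for x y unfolding c_def using pYn_nonneg relay_params K_nonneg by simp
  have im: "(\<lambda>\<omega>. (Sr \<omega>, Xr \<omega>, Yr \<omega>)) ` \<Omega>4 \<subseteq> seqs n \<times> seqs n \<times> seqs n"
    "(\<lambda>\<omega>. (Xr \<omega>, Yr \<omega>)) ` \<Omega>4 \<subseteq> seqs n \<times> seqs n" "Sr ` \<Omega>4 \<subseteq> seqs n"
    unfolding relay_space_def by auto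
  have mXY: "law \<Omega>4 P4 (\<lambda>\<omega>. (Xr \<omega>, Yr \<omega>)) (x, y) = c x y" if "x \<in> seqs n" "y \<in> seqs n" for x y
    using law_marginal[OF pm4 finite_seqs im(3), of "\<lambda>\<omega>. (Xr \<omega>, Yr \<omega>)" "(x, y)"] law_SXY that
      sum_bsc_n[OF that(1)] unfolding c_def by (simp add: sum_distrib_left[symmetric])
  have "(\<Sum>x\<in>seqs n. \<Sum>y\<in>seqs n. c x y) = (\<Sum>v\<in>seqs n \<times> seqs n. law \<Omega>4 P4 (\<lambda>\<omega>. (Xr \<omega>, Yr \<omega>)) v)"
    unfolding sum.cartesian_product by (rule sum.cong) (auto simp: mXY)
  hence sc: "(\<Sum>x\<in>seqs n. \<Sum>y\<in>seqs n. c x y) = 1"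
    using sum_law[OF pm4 finite_cartesian_product[OF finite_seqs finite_seqs] im(2)] by simp
  have "ent \<Omega>4 P4 (\<lambda>\<omega>. (Sr \<omega>, Xr \<omega>, Yr \<omega>)) = - (\<Sum>v\<in>seqs n \<times> seqs n \<times> seqs n.
      law \<Omega>4 P4 (\<lambda>\<omega>. (Sr \<omega>, Xr \<omega>, Yr \<omega>)) v * log 2 (law \<Omega>4 P4 (\<lambda>\<omega>. (Sr \<omega>, Xr \<omega>, Yr \<omega>)) v))"
    by (rule ent_by_law[OF pm4 _ im(1)]) (simp add: finite_seqs)
  also have "\<dots> = - (\<Sum>s\<in>seqs n. \<Sum>x\<in>seqs n. \<Sum>y\<in>seqs n. (c x y * bsc_n \<epsilon> n s x) * log 2 (c x y * bsc_n \<epsilon> n s x))"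
    unfolding sum.cartesian_product
    by (intro arg_cong[where f=uminus] sum.cong refl) (clarsimp simp: law_SXY c_def)
  also have "\<dots> = - (\<Sum>x\<in>seqs n. \<Sum>s\<in>seqs n. \<Sum>y\<in>seqs n. (c x y * bsc_n \<epsilon> n s x) * log 2 (c x y * bsc_n \<epsilon> n s x))"
    by (subst sum.swap) (rule refl)
  also have "\<dots> = - (\<Sum>x\<in>seqs n. \<Sum>y\<in>seqs n. \<Sum>s\<in>seqs n. (c x y * bsc_n \<epsilon> n s x) * log 2 (c x y * bsc_n \<epsilon> n s x))"
    by (intro arg_cong[where f=uminus] sum.cong refl sum.swap)
  also have "\<dots> = - (\<Sum>x\<in>seqs n. \<Sum>y\<in>seqs n. c x y * log 2 (c x y) * (\<Sum>s\<in>seqs n. bsc_n \<epsilon> n s x)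
                   + c x y * (\<Sum>s\<in>seqs n. bsc_n \<epsilon> n s x * log 2 (bsc_n \<epsilon> n s x)))"
    using xlogx_mult[OF c0 bsc_n_nonneg[OF relay_params(5,6)]]
    by (simp add: sum.distrib sum_distrib_left sum_distrib_right algebra_simps)
  also have "\<dots> = - (\<Sum>x\<in>seqs n. \<Sum>y\<in>seqs n. c x y * log 2 (c x y)) + real n * bin_ent \<epsilon>"
    using sum_bsc_n bsc_n_ent[OF relay_params(5,6)] sc
    by (simp add: sum_subtractf sum.distrib sum_distrib_right[symmetric])
  also have "- (\<Sum>x\<in>seqs n. \<Sum>y\<in>seqs n. c x y * log 2 (c x y)) = ent \<Omega>4 P4 (\<lambda>\<omega>. (Xr \<omega>, Yr \<omega>))"
    unfolding ent_by_law[OF pm4 finite_cartesian_product[OF finite_seqs finite_seqs] im(2)] sum.cartesian_product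
    by (intro arg_cong[where f=uminus] sum.cong refl) (clarsimp simp: mXY)
  finally show ?thesis .
qed

text \<open>The converse coding bound for the relay-to-destination link:
  \<open>I(Y\<^sub>1\<^sup>n; S\<^sup>n) \<le> I(X\<^sub>1\<^sup>n; S\<^sup>n) \<le> n (1 - h(\<epsilon>)) = n R\<^sub>0\<close>.\<close>
lemma relay_capacity: "mutual_info_YW p \<delta> n (seqs n) Qs \<le> real n * (1 - bin_ent \<epsilon>)"
proof -
  have im: "Yr ` \<Omega>4 \<subseteq> seqs n" "Xr ` \<Omega>4 \<subseteq> seqs n" "Sr ` \<Omega>4 \<subseteq> seqs n"
    unfolding relay_space_def by auto
  have "ent \<Omega>4 P4 (\<lambda>\<omega>. (Sr \<omega>, Xr \<omega>, Yr \<omega>)) + ent \<Omega>4 P4 Yr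
        \<le> ent \<Omega>4 P4 (\<lambda>\<omega>. (Sr \<omega>, Yr \<omega>)) + ent \<Omega>4 P4 (\<lambda>\<omega>. (Xr \<omega>, Yr \<omega>))"
    by (rule submod[OF pm4 finite_seqs finite_seqs finite_seqs im(3,2,1)])
  moreover have "ent \<Omega>4 P4 Sr \<le> log 2 (card (seqs n))"
    by (rule ent_le_log_card[OF pm4 finite_seqs im(3)]) (auto simp: seqs_def intro: exI[of _ "replicate n False"])
  hence "ent \<Omega>4 P4 Sr \<le> real n" by (simp add: card_seqs log_nat_power)
  moreover have "ent \<Omega>4 P4 (\<lambda>\<omega>. (Yr \<omega>, Sr \<omega>)) = ent \<Omega>4 P4 (\<lambda>\<omega>. (Sr \<omega>, Yr \<omega>))" by (rule ent_swap)
  ultimately show ?thesis unfolding mutual_info_relay using ent_SXY by (simp add: algebra_simps)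
qed

end

context binary_source
begin

theorem relay_converse:
  assumes "0 \<le> \<epsilon>" "\<epsilon> \<le> 1" and "relay_kernel n K"
  shows "real n * Gmin (1 - bin_ent \<epsilon>) \<le> H_Zn_Sn p \<delta> \<epsilon> n K"
proof -
  interpret relay_system p \<delta> \<epsilon> n K using params assms by unfold_locales auto
  define I where "I = mutual_info_YW p \<delta> n (seqs n) Qs"
  have I0: "0 \<le> I" unfolding I_def by (rule mutual_info_YW_nonneg[OF params finite_seqs out_kernel])
  have block: "real n * Gmin (I / real n) \<le> H_Zn_Sn p \<delta> \<epsilon> n K"
    unfolding I_def H_Zn_Sn_block by (rule block_converse[OF finite_seqs out_kernel])
  show ?thesis
  proof (cases "n = 0")
    case False
    have "I / real n \<le> 1 - bin_ent \<epsilon>" using relay_capacity False unfolding I_def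
      by (simp add: divide_le_eq mult.commute)
    hence "Gmin (1 - bin_ent \<epsilon>) \<le> Gmin (I / real n)" using I0 by (intro Gmin_mono) auto
    thus ?thesis using block by (meson mult_left_mono of_nat_0_le_iff order_trans)
  qed (use block in simp)
qed

end

section \<open>The main theorem\<close>

lemma H_ZU_deterministic:
  assumes "p = 0 \<or> p = 1"
  shows "H_ZU p \<delta> m q = 0"
proof -
  have pU_split: "pU p \<delta> q u = pZU p \<delta> q True u + pZU p \<delta> q False u" for u
    unfolding pU_def pZU_def by (simp add: sum_UNIV_bool)
  have impossible: "pZU p \<delta> q (p = 0) u = 0" for u
    using assms unfolding pZU_def pZYU_def by auto
  have "xlogxy (pZU p \<delta> q b u) (pU p \<delta> q u) = 0" for b u
  proof (cases "b = (p = 0)")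
    case False
    hence "pU p \<delta> q u = pZU p \<delta> q b u" using impossible[of u] pU_split[of u] by (cases b) auto
    thus ?thesis by (simp add: xlogxy_def)
  qed (simp add: impossible xlogxy_def)
  thus ?thesis unfolding H_ZU_def by simp
qed

lemma constant_test_channel:
  "test_channel 1 (\<lambda>_ _. 1)" "I_UY p \<delta> 1 (\<lambda>_ _. 1) = 0"
proof -
  show "test_channel 1 (\<lambda>_ _. 1)" unfolding test_channel_def by simp
  have "pU p \<delta> (\<lambda>_ _. 1) 0 = 1" "pYU p \<delta> (\<lambda>_ _. 1) y 0 = pY1 p \<delta> y" for y
    unfolding pU_def pYU_def pY1_def pZYU_def by (simp_all add: sum_UNIV_bool algebra_simps)
  thus "I_UY p \<delta> 1 (\<lambda>_ _. 1) = 0" unfolding I_UY_def by (simp add: xlogxy_def sum_UNIV_bool)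
qed

lemma H_Zn_Sn_nonneg:
  assumes "0 \<le> p" "p \<le> 1" "0 \<le> \<delta>" "\<delta> \<le> 1" "0 \<le> \<epsilon>" "\<epsilon> \<le> 1" "relay_kernel n K"
  shows "0 \<le> H_Zn_Sn p \<delta> \<epsilon> n K"
proof -
  interpret relay_system p \<delta> \<epsilon> n K using assms by unfold_locales
  show ?thesis unfolding H_Zn_Sn_block
    by (rule cond_ent_ZW_nonneg[OF assms(1-4) finite_seqs out_kernel])
qed

text \<open>For a nondegenerate source the minimiser is the test channel realising \<open>Gmin(R\<^sub>0)\<close>;
  for a deterministic source every test channel is optimal and the constant one is feasible.\<close>
theorem lemma1:
  fixes p \<delta> \<epsilon> :: real and n :: nat and K :: "bool list \<Rightarrow> bool list \<Rightarrow> real"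
  assumes "0 \<le> p" "p \<le> 1" "0 \<le> \<delta>" "\<delta> \<le> 1" "0 \<le> \<epsilon>" "\<epsilon> \<le> 1"
    and "relay_kernel n K"
  shows "\<exists>m q. m \<le> 4 \<and> test_channel m q \<and> I_UY p \<delta> m q \<le> 1 - bin_ent \<epsilon>
           \<and> (\<forall>m' q'. test_channel m' q' \<and> I_UY p \<delta> m' q' \<le> 1 - bin_ent \<epsilon>
                 \<longrightarrow> H_ZU p \<delta> m q \<le> H_ZU p \<delta> m' q')
           \<and> H_Zn_Sn p \<delta> \<epsilon> n K \<ge> real n * H_ZU p \<delta> m q"
proof (cases "0 < p \<and> p < 1")
  case True
  interpret binary_source p \<delta> using True assms(3,4) by unfold_locales auto
  have "0 \<le> 1 - bin_ent \<epsilon>" using bin_ent_le1[OF assms(5,6)] by simp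
  then obtain m q where "m \<le> 4" "test_channel m q" "I_UY p \<delta> m q \<le> 1 - bin_ent \<epsilon>"
    and opt: "H_ZU p \<delta> m q = Gmin (1 - bin_ent \<epsilon>)"
    by (rule Gmin_achieved)
  moreover have "real n * H_ZU p \<delta> m q \<le> H_Zn_Sn p \<delta> \<epsilon> n K"
    unfolding opt by (rule relay_converse[OF assms(5-7)])
  ultimately show ?thesis using Gmin_le_H_ZU by (metis opt)
next
  case False
  hence det: "p = 0 \<or> p = 1" using assms(1,2) by auto
  have "real n * H_ZU p \<delta> 1 (\<lambda>_ _. 1) \<le> H_Zn_Sn p \<delta> \<epsilon> n K"
    using H_ZU_deterministic[OF det] H_Zn_Sn_nonneg[OF assms] by simp
  moreover have "I_UY p \<delta> 1 (\<lambda>_ _. 1) \<le> 1 - bin_ent \<epsilon>"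
    using constant_test_channel(2) bin_ent_le1[OF assms(5,6)] by simp
  ultimately show ?thesis
    using constant_test_channel(1) H_ZU_deterministic[OF det] by (intro exI[of _ 1] exI) auto
qed

end
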